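(* For any $a,b\in\operatorname{End}(H)$: $Ta_1=Tb_1\iff Ta_2=Tb_2$, and $Ta_3=Tb_3\iff Ta_4=Tb_4$. Consequently $a\stackrel{T}{=}b$ holds if and only if $Ta_r=Tb_r$ for some $r\in\{1,2\}$ and $Ta_s=Tb_s$ for some $s\in\{3,4\}$.
   Context: Let $\mathcal C$ be a strict monoidal category with tensor product $\boxtimes$ and unit object $\mathbb I$ which is an Ab-category (all Hom-sets are abelian groups, composition and $\boxtimes$ are biadditive) whose ground ring $\mathsf k=\operatorname{End}(\mathbb I)$ is a field; each $\operatorname{Hom}(V,W)$ is a $\mathsf k$-vector space via $kf=k\boxtimes f$, and $\boxtimes$ is $\mathsf k$-bilinear on morphisms. An object $V$ is simple if $\operatorname{End}(V)=\mathsf k\,\mathrm{Id}_V$; for such $V$ and $f\in\operatorname{End}(V)$, $\langle f\rangle\in\mathsf k$ denotes the scalar with $f=\langle f\rangle\mathrm{Id}_V$. For objects $V_i$ write $H^{ij}_k=\operatorname{Hom}(V_k,V_i\boxtimes V_j)$ and $H^k_{ij}=\operatorname{Hom}(V_i\boxtimes V_j,V_k)$. A $\Psi$-system in $\mathcal C$ consists of (1) a family of simple objects $\{V_i\}_{i\in I}$ with $\operatorname{Hom}(V_i,V_j)=0$ for $i\neq j$; (2) an involution $i\mapsto i^*$ of $I$; (3) morphisms $b_i:\mathbb I\to V_i\boxtimes V_{i^*}$, $d_i:V_i\boxtimes V_{i^*}\to\mathbb I$ ($i\in I$) with $(\mathrm{Id}_{V_i}\boxtimes d_{i^*})(b_i\boxtimes\mathrm{Id}_{V_i})=\mathrm{Id}_{V_i}$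 and $(d_i\boxtimes\mathrm{Id}_{V_i})(\mathrm{Id}_{V_i}\boxtimes b_{i^*})=\mathrm{Id}_{V_i}$; (4) for all $i,j\in I$ such that $H^{ij}_k\neq0$ for some $k\in I$, the morphism $\mathrm{Id}_{V_i\boxtimes V_j}$ lies in the image of the linear map $\bigoplus_{k\in I}H^{ij}_k\otimes_{\mathsf k}H^k_{ij}\to\operatorname{End}(V_i\boxtimes V_j)$, $x\otimes y\mapsto x\circ y$. Fix a $\Psi$-system in $\mathcal C$. Let $\hat H=\bigoplus_{i,j,k\in I}H^k_{ij}$, $\check H=\bigoplus_{i,j,k\in I}H^{ij}_k$, $H=\hat H\oplus\check H$, and let $\pi^k_{ij}:H\to H^k_{ij}$, $\pi^{ij}_k:H\to H^{ij}_k$ be the projections. Define $A,B\in\operatorname{End}_{\mathsf k}(H)$ by $Ax=\sum_{i,j,k\in I}\big((\mathrm{Id}_{V_{i^*}}\boxtimes\pi^k_{ij}x)(b_{i^*}\boxtimes\mathrm{Id}_{V_j})+(d_{i^*}\boxtimes\mathrm{Id}_{V_j})(\mathrm{Id}_{V_{i^*}}\boxtimes\pi^{ij}_kx)\big)$, $Bx=\sum_{i,j,k\in I}\big((\pi^k_{ij}x\boxtimes\mathrm{Id}_{V_{j^*}})(\mathrm{Id}_{V_i}\boxtimes b_j)+(\mathrm{Id}_{V_i}\boxtimes d_j)(\pi^{ij}_kx\boxtimes\mathrm{Id}_{V_{j^*}})\big)$. Define the symmetric bilinear form on $H$: $\langle x,y\rangle=\sum_{i,j,k\in I}\big(\langle\pi^k_{ij}x\circ\pi^{ij}_ky\rangle+\langle\pi^k_{ij}y\circ\pi^{ij}_kx\rangle\big)$.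 A transpose of $f\in\operatorname{End}(H)$ is the (unique) $f^*\in\operatorname{End}(H)$ with $\langle fx,y\rangle=\langle x,f^*y\rangle$ for all $x,y\in H$; $A^*$, $B^*$ denote the transposes of $A$, $B$ (which exist). Define the linear form $T:H^{\otimes4}\to\mathsf k$ by $T(u\otimes v\otimes x\otimes y)=\sum_{i,j,k,l,m,n\in I}\big\langle \pi^m_{kl}u\circ(\pi^k_{ij}v\boxtimes\mathrm{Id}_{V_l})\circ(\mathrm{Id}_{V_i}\boxtimes\pi^{jl}_nx)\circ\pi^{in}_my\big\rangle$. For $f\in\operatorname{End}(H)$ and $r\in\{1,2,3,4\}$, $f_r\in\operatorname{End}(H^{\otimes4})$ acts as $f$ on the $r$-th tensor factor and as the identity on the others, and $Tf_r$ denotes $T\circ f_r$. Two operators $a,b\in\operatorname{End}(H)$ are $T$-equal, written $a\stackrel{T}{=}b$, if $Ta_r=Tb_r$ for all $r=1,2,3,4$. *)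

theory Defs
  imports Main "HOL-Library.Groups_Big_Fun"
begin

record ('o, 'm) mcat =
  mdom  :: "'m \<Rightarrow> 'o"
  mcod  :: "'m \<Rightarrow> 'o"
  mcomp :: "'m \<Rightarrow> 'm \<Rightarrow> 'm"      (* mcomp g f = g o f *)
  mid   :: "'o \<Rightarrow> 'm"
  otens :: "'o \<Rightarrow> 'o \<Rightarrow> 'o"
  mtens :: "'m \<Rightarrow> 'm \<Rightarrow> 'm"
  munit :: "'o"
  madd  :: "'m \<Rightarrow> 'm \<Rightarrow> 'm"
  mzero :: "'o \<Rightarrow> 'o \<Rightarrow> 'm"
  mneg  :: "'m \<Rightarrow> 'm"

definition hom :: "('o, 'm, 'z) mcat_scheme \<Rightarrow> 'o \<Rightarrow> 'o \<Rightarrow> 'm set" where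
  "hom C X Y = {f. mdom C f = X \<and> mcod C f = Y}"

definition strict_monoidal_ab_cat :: "('o, 'm, 'z) mcat_scheme \<Rightarrow> bool" where
  "strict_monoidal_ab_cat C \<longleftrightarrow>
    \<comment> \<open>category\<close>
    (\<forall>X. mid C X \<in> hom C X X) \<and>
    (\<forall>f g. mdom C g = mcod C f \<longrightarrow> mcomp C g f \<in> hom C (mdom C f) (mcod C g)) \<and>
    (\<forall>f. mcomp C f (mid C (mdom C f)) = f \<and> mcomp C (mid C (mcod C f)) f = f) \<and>
    (\<forall>f g h. mdom C g = mcod C f \<longrightarrow> mdom C h = mcod C g \<longrightarrow>
        mcomp C h (mcomp C g f) = mcomp C (mcomp C h g) f) \<and>
    \<comment> \<open>strict monoidal structure\<close>
    (\<forall>f g. mtens C f g \<in> hom C (otens C (mdom C f) (mdom C g)) (otens C (mcod C f) (mcod C g))) \<and>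
    (\<forall>X Y. mtens C (mid C X) (mid C Y) = mid C (otens C X Y)) \<and>
    (\<forall>f f' g g'. mdom C f' = mcod C f \<longrightarrow> mdom C g' = mcod C g \<longrightarrow>
        mtens C (mcomp C f' f) (mcomp C g' g) = mcomp C (mtens C f' g') (mtens C f g)) \<and>
    (\<forall>X Y Z. otens C (otens C X Y) Z = otens C X (otens C Y Z)) \<and>
    (\<forall>X. otens C (munit C) X = X \<and> otens C X (munit C) = X) \<and>
    (\<forall>f g h. mtens C (mtens C f g) h = mtens C f (mtens C g h)) \<and>
    (\<forall>f. mtens C (mid C (munit C)) f = f \<and> mtens C f (mid C (munit C)) = f) \<and>
    \<comment> \<open>Ab-category: Hom-sets are abelian groups\<close>
    (\<forall>X Y. mzero C X Y \<in> hom C X Y) \<and>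
    (\<forall>X Y. \<forall>f\<in>hom C X Y. \<forall>g\<in>hom C X Y. madd C f g \<in> hom C X Y) \<and>
    (\<forall>X Y. \<forall>f\<in>hom C X Y. mneg C f \<in> hom C X Y) \<and>
    (\<forall>X Y. \<forall>f\<in>hom C X Y. \<forall>g\<in>hom C X Y. \<forall>h\<in>hom C X Y.
        madd C (madd C f g) h = madd C f (madd C g h)) \<and>
    (\<forall>X Y. \<forall>f\<in>hom C X Y. \<forall>g\<in>hom C X Y. madd C f g = madd C g f) \<and>
    (\<forall>X Y. \<forall>f\<in>hom C X Y. madd C f (mzero C X Y) = f) \<and>
    (\<forall>X Y. \<forall>f\<in>hom C X Y. madd C f (mneg C f) = mzero C X Y) \<and>
    \<comment> \<open>composition is biadditive\<close>
    (\<forall>X Y Z. \<forall>f\<in>hom C X Y. \<forall>g\<in>hom C Y Z. \<forall>g'\<in>hom C Y Z.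
        mcomp C (madd C g g') f = madd C (mcomp C g f) (mcomp C g' f)) \<and>
    (\<forall>X Y Z. \<forall>f\<in>hom C X Y. \<forall>f'\<in>hom C X Y. \<forall>g\<in>hom C Y Z.
        mcomp C g (madd C f f') = madd C (mcomp C g f) (mcomp C g f')) \<and>
    \<comment> \<open>tensor product is biadditive\<close>
    (\<forall>X Y X' Y'. \<forall>f\<in>hom C X Y. \<forall>f'\<in>hom C X Y. \<forall>g\<in>hom C X' Y'.
        mtens C (madd C f f') g = madd C (mtens C f g) (mtens C f' g)) \<and>
    (\<forall>X Y X' Y'. \<forall>f\<in>hom C X Y. \<forall>g\<in>hom C X' Y'. \<forall>g'\<in>hom C X' Y'.
        mtens C f (madd C g g') = madd C (mtens C f g) (mtens C f g'))"

text \<open>The ground ring End(I) is a field: it is identified, via the ring isomorphism sc,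
  with a field 'k.  Morphisms are k-vector spaces via k f = k \<boxtimes> f, and the tensor
  product is k-bilinear.\<close>

definition ground_field :: "('o, 'm, 'z) mcat_scheme \<Rightarrow> ('k::field \<Rightarrow> 'm) \<Rightarrow> bool" where
  "ground_field C sc \<longleftrightarrow>
    bij_betw sc UNIV (hom C (munit C) (munit C)) \<and>
    (\<forall>a b. sc (a + b) = madd C (sc a) (sc b)) \<and>
    (\<forall>a b. sc (a * b) = mcomp C (sc a) (sc b)) \<and>
    sc 1 = mid C (munit C) \<and>
    (\<forall>c f g. mtens C f (mtens C (sc c) g) = mtens C (sc c) (mtens C f g))"

definition smult :: "('o, 'm, 'z) mcat_scheme \<Rightarrow> ('k \<Rightarrow> 'm) \<Rightarrow> 'k \<Rightarrow> 'm \<Rightarrow> 'm" where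
  "smult C sc c f = mtens C (sc c) f"

definition simple_obj :: "('o, 'm, 'z) mcat_scheme \<Rightarrow> ('k \<Rightarrow> 'm) \<Rightarrow> 'o \<Rightarrow> bool" where
  "simple_obj C sc V \<longleftrightarrow> mid C V \<noteq> mzero C V V \<and>
     (\<forall>f\<in>hom C V V. \<exists>c. f = smult C sc c (mid C V))"

definition bracket :: "('o, 'm, 'z) mcat_scheme \<Rightarrow> ('k \<Rightarrow> 'm) \<Rightarrow> 'o \<Rightarrow> 'm \<Rightarrow> 'k" where
  "bracket C sc V f = (THE c. f = smult C sc c (mid C V))"

definition psi_system ::
  "('o, 'm, 'z) mcat_scheme \<Rightarrow> ('k \<Rightarrow> 'm) \<Rightarrow> ('i \<Rightarrow> 'o) \<Rightarrow> ('i \<Rightarrow> 'i) \<Rightarrow> ('i \<Rightarrow> 'm) \<Rightarrow> ('i \<Rightarrow> 'm) \<Rightarrow> bool" where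
  "psi_system C sc V st bb dd \<longleftrightarrow>
    (\<forall>i. simple_obj C sc (V i)) \<and>
    (\<forall>i j. i \<noteq> j \<longrightarrow> hom C (V i) (V j) = {mzero C (V i) (V j)}) \<and>
    (\<forall>i. st (st i) = i) \<and>
    (\<forall>i. bb i \<in> hom C (munit C) (otens C (V i) (V (st i)))) \<and>
    (\<forall>i. dd i \<in> hom C (otens C (V i) (V (st i))) (munit C)) \<and>
    (\<forall>i. mcomp C (mtens C (mid C (V i)) (dd (st i))) (mtens C (bb i) (mid C (V i))) = mid C (V i)) \<and>
    (\<forall>i. mcomp C (mtens C (dd i) (mid C (V i))) (mtens C (mid C (V i)) (bb (st i))) = mid C (V i)) \<and>
    (\<forall>i j. (\<exists>k. hom C (V k) (otens C (V i) (V j)) \<noteq> {mzero C (V k) (otens C (V i) (V j))}) \<longrightarrow>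
       (\<exists>ts :: ('i \<times> 'm \<times> 'm) list.
          (\<forall>(k, x, y)\<in>set ts. x \<in> hom C (V k) (otens C (V i) (V j)) \<and>
                              y \<in> hom C (otens C (V i) (V j)) (V k)) \<and>
          foldr (\<lambda>(k, x, y) acc. madd C (mcomp C x y) acc) ts
                (mzero C (otens C (V i) (V j)) (otens C (V i) (V j)))
            = mid C (otens C (V i) (V j))))"

text \<open>An element of H = Hhat (+) Hcheck is a pair (h, c) of finitely supported families:
  h (i,j,k) \<in> H^k_{ij} = Hom(V_i \<boxtimes> V_j, V_k) and c (i,j,k) \<in> H^{ij}_k = Hom(V_k, V_i \<boxtimes> V_j).
  So fst x (i,j,k) is pi^k_{ij} x and snd x (i,j,k) is pi^{ij}_k x.\<close>

type_synonym ('i, 'm) Helem = "('i \<times> 'i \<times> 'i \<Rightarrow> 'm) \<times> ('i \<times> 'i \<times> 'i \<Rightarrow> 'm)"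

definition Hsp :: "('o, 'm, 'z) mcat_scheme \<Rightarrow> ('i \<Rightarrow> 'o) \<Rightarrow> ('i, 'm) Helem set" where
  "Hsp C V = {(h, c).
     (\<forall>i j k. h (i, j, k) \<in> hom C (otens C (V i) (V j)) (V k)) \<and>
     (\<forall>i j k. c (i, j, k) \<in> hom C (V k) (otens C (V i) (V j))) \<and>
     finite {(i, j, k). h (i, j, k) \<noteq> mzero C (otens C (V i) (V j)) (V k)} \<and>
     finite {(i, j, k). c (i, j, k) \<noteq> mzero C (V k) (otens C (V i) (V j))}}"

definition hadd :: "('o, 'm, 'z) mcat_scheme \<Rightarrow> ('i, 'm) Helem \<Rightarrow> ('i, 'm) Helem \<Rightarrow> ('i, 'm) Helem" where
  "hadd C x y = ((\<lambda>t. madd C (fst x t) (fst y t)), (\<lambda>t. madd C (snd x t) (snd y t)))"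

definition hsmult :: "('o, 'm, 'z) mcat_scheme \<Rightarrow> ('k \<Rightarrow> 'm) \<Rightarrow> 'k \<Rightarrow> ('i, 'm) Helem \<Rightarrow> ('i, 'm) Helem" where
  "hsmult C sc c x = ((\<lambda>t. smult C sc c (fst x t)), (\<lambda>t. smult C sc c (snd x t)))"

text \<open>End_k(H): k-linear endomorphisms of H (only their values on H matter).\<close>
definition endH :: "('o, 'm, 'z) mcat_scheme \<Rightarrow> ('k \<Rightarrow> 'm) \<Rightarrow> ('i \<Rightarrow> 'o)
    \<Rightarrow> (('i, 'm) Helem \<Rightarrow> ('i, 'm) Helem) set" where
  "endH C sc V = {f.
     (\<forall>x\<in>Hsp C V. f x \<in> Hsp C V) \<and>
     (\<forall>x\<in>Hsp C V. \<forall>y\<in>Hsp C V. f (hadd C x y) = hadd C (f x) (f y)) \<and>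
     (\<forall>c. \<forall>x\<in>Hsp C V. f (hsmult C sc c x) = hsmult C sc c (f x))}"

text \<open>T evaluated on a pure tensor u \<otimes> v \<otimes> x \<otimes> y (finitely many nonzero summands).\<close>
definition Tform :: "('o, 'm, 'z) mcat_scheme \<Rightarrow> ('k::field \<Rightarrow> 'm) \<Rightarrow> ('i \<Rightarrow> 'o)
    \<Rightarrow> ('i, 'm) Helem \<Rightarrow> ('i, 'm) Helem \<Rightarrow> ('i, 'm) Helem \<Rightarrow> ('i, 'm) Helem \<Rightarrow> 'k" where
  "Tform C sc V u v x y = Sum_any (\<lambda>(i, j, k, l, m, n).
     bracket C sc (V m)
       (mcomp C (fst u (k, l, m))
         (mcomp C (mtens C (fst v (i, j, k)) (mid C (V l)))
           (mcomp C (mtens C (mid C (V i)) (snd x (j, l, n)))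
             (snd y (i, n, m))))))"

definition Tr :: "('o, 'm, 'z) mcat_scheme \<Rightarrow> ('k::field \<Rightarrow> 'm) \<Rightarrow> ('i \<Rightarrow> 'o) \<Rightarrow> nat
    \<Rightarrow> (('i, 'm) Helem \<Rightarrow> ('i, 'm) Helem)
    \<Rightarrow> ('i, 'm) Helem \<Rightarrow> ('i, 'm) Helem \<Rightarrow> ('i, 'm) Helem \<Rightarrow> ('i, 'm) Helem \<Rightarrow> 'k" where
  "Tr C sc V r f u v x y =
     (if r = 1 then Tform C sc V (f u) v x y
      else if r = 2 then Tform C sc V u (f v) x y
      else if r = 3 then Tform C sc V u v (f x) y
      else Tform C sc V u v x (f y))"

text \<open>T a_r = T b_r as linear forms on H^{\<otimes>4}, i.e. on all pure tensors.\<close>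
definition Teq :: "('o, 'm, 'z) mcat_scheme \<Rightarrow> ('k::field \<Rightarrow> 'm) \<Rightarrow> ('i \<Rightarrow> 'o) \<Rightarrow> nat
    \<Rightarrow> (('i, 'm) Helem \<Rightarrow> ('i, 'm) Helem) \<Rightarrow> (('i, 'm) Helem \<Rightarrow> ('i, 'm) Helem) \<Rightarrow> bool" where
  "Teq C sc V r a b \<longleftrightarrow>
     (\<forall>u\<in>Hsp C V. \<forall>v\<in>Hsp C V. \<forall>x\<in>Hsp C V. \<forall>y\<in>Hsp C V.
        Tr C sc V r a u v x y = Tr C sc V r b u v x y)"

definition Tequal :: "('o, 'm, 'z) mcat_scheme \<Rightarrow> ('k::field \<Rightarrow> 'm) \<Rightarrow> ('i \<Rightarrow> 'o)
    \<Rightarrow> (('i, 'm) Helem \<Rightarrow> ('i, 'm) Helem) \<Rightarrow> (('i, 'm) Helem \<Rightarrow> ('i, 'm) Helem) \<Rightarrow> bool" where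
  "Tequal C sc V a b \<longleftrightarrow> (\<forall>r\<in>{1, 2, 3, 4}. Teq C sc V r a b)"

end

theory Submission
  imports Defs
begin

text \<open>
  The form T(u \<otimes> v \<otimes> x \<otimes> y) is a sum over index 6-tuples (i,j,k,l,m,n) of the
  scalars of "trees"  u' \<circ> (v' \<boxtimes> Id) \<circ> (Id \<boxtimes> x') \<circ> y'  built from one component of
  each argument.  Since elements of H concentrated in a single component exist for every
  morphism, T a_r = T b_r holds iff for every w \<in> H and every index triple the
  components of a w and b w cannot be told apart when inserted into position r of an
  arbitrary tree (lemmas Teq1_iff .. Teq4_iff).  For the two positions in H-hat, these
  two "indistinguishability" relations coincide (indist1_iff_indist2): bending the
  right leg of a tree with the duality morphisms b, d moves the tested morphism from
  position 1 to position 2 and back, and the decomposition of Id_{V_i \<boxtimes> V_j}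
  through simple objects (axiom (4) of a \<Psi>-system) reduces equality of morphisms out of
  (or into) V_i \<boxtimes> V_j to equality of their restrictions to simple objects, where all but
  one summand vanish by orthogonality.  Positions 3 and 4 in H-check are positions 2 and
  1 of the same construction in the opposite category, which again carries a
  \<Psi>-system (op_psi_context); this gives indist3_iff_indist4.
\<close>

section \<open>The opposite of a strict monoidal category\<close>

text \<open>Reverse both composition and tensor product; a \<Psi>-system of C is one of the
  opposite category with the roles of b and d exchanged.\<close>

definition op_mcat :: "('o, 'm) mcat \<Rightarrow> ('o, 'm) mcat" where
  "op_mcat C = \<lparr>mdom = mcod C, mcod = mdom C, mcomp = (\<lambda>g f. mcomp C f g), mid = mid C,
     otens = (\<lambda>X Y. otens C Y X), mtens = (\<lambda>f g. mtens C g f), munit = munit C, madd = madd C,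
     mzero = (\<lambda>X Y. mzero C Y X), mneg = mneg C\<rparr>"

lemma op_mcat_sel[simp]:
  "mdom (op_mcat C) = mcod C" "mcod (op_mcat C) = mdom C" "mcomp (op_mcat C) g f = mcomp C f g"
  "mid (op_mcat C) = mid C" "otens (op_mcat C) X Y = otens C Y X" "mtens (op_mcat C) f g = mtens C g f"
  "munit (op_mcat C) = munit C" "madd (op_mcat C) = madd C" "mzero (op_mcat C) X Y = mzero C Y X"
  "mneg (op_mcat C) = mneg C"
  by (simp_all add: op_mcat_def)

lemma hom_op_mcat[simp]: "hom (op_mcat C) X Y = hom C Y X"
  by (auto simp: hom_def)

locale psi_context =
  fixes C :: "('o, 'm) mcat" and sc :: "'k::field \<Rightarrow> 'm" and V :: "'i \<Rightarrow> 'o"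
    and st :: "'i \<Rightarrow> 'i" and bb dd :: "'i \<Rightarrow> 'm"
  assumes smc: "strict_monoidal_ab_cat C"
    and gf: "ground_field C sc"
    and ps: "psi_system C sc V st bb dd"
begin

abbreviation cp (infixr "\<cdot>" 75) where "g \<cdot> f \<equiv> mcomp C g f"
abbreviation tn (infixr "\<otimes>" 80) where "f \<otimes> g \<equiv> mtens C f g"
abbreviation ot (infixr "\<odot>" 80) where "X \<odot> Y \<equiv> otens C X Y"
abbreviation idm where "idm X \<equiv> mid C X"
abbreviation dm where "dm f \<equiv> mdom C f"
abbreviation cd where "cd f \<equiv> mcod C f"
abbreviation U where "U \<equiv> munit C"
abbreviation pl (infixl "\<oplus>" 65) where "f \<oplus> g \<equiv> madd C f g"
abbreviation zr where "zr X Y \<equiv> mzero C X Y"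

lemmas smc_axioms = smc[unfolded strict_monoidal_ab_cat_def hom_def, simplified]

lemma dom_id[simp]: "dm (idm X) = X" and cod_id[simp]: "cd (idm X) = X"
  using smc_axioms by auto
lemma dom_cp[simp]: "dm g = cd f \<Longrightarrow> dm (g \<cdot> f) = dm f" using smc_axioms by auto
lemma cod_cp[simp]: "dm g = cd f \<Longrightarrow> cd (g \<cdot> f) = cd g" using smc_axioms by auto
lemma dom_tn[simp]: "dm (f \<otimes> g) = dm f \<odot> dm g" using smc_axioms by auto
lemma cod_tn[simp]: "cd (f \<otimes> g) = cd f \<odot> cd g" using smc_axioms by auto
lemma cp_id1[simp]: "dm f = X \<Longrightarrow> f \<cdot> idm X = f" using smc_axioms by auto
lemma cp_id2[simp]: "cd f = X \<Longrightarrow> idm X \<cdot> f = f" using smc_axioms by auto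
lemma cp_assoc: "dm g = cd f \<Longrightarrow> dm h = cd g \<Longrightarrow> h \<cdot> (g \<cdot> f) = (h \<cdot> g) \<cdot> f"
  using smc_axioms by auto
lemma tn_id[simp]: "idm X \<otimes> idm Y = idm (X \<odot> Y)" using smc_axioms by auto
lemma interchange:
  "dm f' = cd f \<Longrightarrow> dm g' = cd g \<Longrightarrow> (f' \<otimes> g') \<cdot> (f \<otimes> g) = (f' \<cdot> f) \<otimes> (g' \<cdot> g)"
  using smc_axioms by auto
lemma ot_assoc[simp]: "(X \<odot> Y) \<odot> Z = X \<odot> (Y \<odot> Z)" using smc_axioms by auto
lemma ot_U[simp]: "U \<odot> X = X" "X \<odot> U = X" using smc_axioms by auto
lemma tn_assoc[simp]: "(f \<otimes> g) \<otimes> h = f \<otimes> (g \<otimes> h)" using smc_axioms by auto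
lemma tn_U[simp]: "idm U \<otimes> f = f" "f \<otimes> idm U = f" using smc_axioms by auto
lemma dom_zr[simp]: "dm (zr X Y) = X" and cod_zr[simp]: "cd (zr X Y) = Y" using smc_axioms by auto

lemma idsplit[simp]: "idm (X \<odot> Y) \<otimes> f = idm X \<otimes> (idm Y \<otimes> f)"
  by (metis tn_assoc tn_id)

lemma tcomp_l: "dm f = cd g \<Longrightarrow> idm X \<otimes> (f \<cdot> g) = (idm X \<otimes> f) \<cdot> (idm X \<otimes> g)"
  by (simp add: interchange)
lemma tcomp_r: "dm f = cd g \<Longrightarrow> (f \<cdot> g) \<otimes> idm X = (f \<otimes> idm X) \<cdot> (g \<otimes> idm X)"
  by (simp add: interchange)

lemma ax_add: "\<forall>X Y. \<forall>f\<in>hom C X Y. \<forall>g\<in>hom C X Y. f \<oplus> g \<in> hom C X Y"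
  using smc unfolding strict_monoidal_ab_cat_def by (elim conjE) assumption
lemma ax_neg: "\<forall>X Y. \<forall>f\<in>hom C X Y. mneg C f \<in> hom C X Y"
  using smc unfolding strict_monoidal_ab_cat_def by (elim conjE) assumption
lemma ax_assoc: "\<forall>X Y. \<forall>f\<in>hom C X Y. \<forall>g\<in>hom C X Y. \<forall>h\<in>hom C X Y. (f \<oplus> g) \<oplus> h = f \<oplus> (g \<oplus> h)"
  using smc unfolding strict_monoidal_ab_cat_def by (elim conjE) assumption
lemma ax_comm: "\<forall>X Y. \<forall>f\<in>hom C X Y. \<forall>g\<in>hom C X Y. f \<oplus> g = g \<oplus> f"
  using smc unfolding strict_monoidal_ab_cat_def by (elim conjE) assumption
lemma ax_zr: "\<forall>X Y. \<forall>f\<in>hom C X Y. f \<oplus> zr X Y = f"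
  using smc unfolding strict_monoidal_ab_cat_def by (elim conjE) assumption
lemma ax_negz: "\<forall>X Y. \<forall>f\<in>hom C X Y. f \<oplus> mneg C f = zr X Y"
  using smc unfolding strict_monoidal_ab_cat_def by (elim conjE) assumption
lemma ax_cpl: "\<forall>X Y Z. \<forall>f\<in>hom C X Y. \<forall>g\<in>hom C Y Z. \<forall>g'\<in>hom C Y Z. (g \<oplus> g') \<cdot> f = (g \<cdot> f) \<oplus> (g' \<cdot> f)"
  using smc unfolding strict_monoidal_ab_cat_def by (elim conjE) assumption
lemma ax_cpr: "\<forall>X Y Z. \<forall>f\<in>hom C X Y. \<forall>f'\<in>hom C X Y. \<forall>g\<in>hom C Y Z. g \<cdot> (f \<oplus> f') = (g \<cdot> f) \<oplus> (g \<cdot> f')"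
  using smc unfolding strict_monoidal_ab_cat_def by (elim conjE) assumption
lemma ax_tnl: "\<forall>X Y X' Y'. \<forall>f\<in>hom C X Y. \<forall>f'\<in>hom C X Y. \<forall>g\<in>hom C X' Y'. (f \<oplus> f') \<otimes> g = (f \<otimes> g) \<oplus> (f' \<otimes> g)"
  using smc unfolding strict_monoidal_ab_cat_def by (elim conjE) assumption
lemma ax_tnr: "\<forall>X Y X' Y'. \<forall>f\<in>hom C X Y. \<forall>g\<in>hom C X' Y'. \<forall>g'\<in>hom C X' Y'. f \<otimes> (g \<oplus> g') = (f \<otimes> g) \<oplus> (f \<otimes> g')"
  using smc unfolding strict_monoidal_ab_cat_def by (elim conjE) assumption
lemma ax_zrh: "\<forall>X Y. zr X Y \<in> hom C X Y"
  using smc unfolding strict_monoidal_ab_cat_def by (elim conjE) assumption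

lemma add_hom: "dm f = X \<Longrightarrow> cd f = Y \<Longrightarrow> dm g = X \<Longrightarrow> cd g = Y \<Longrightarrow> dm (f \<oplus> g) = X \<and> cd (f \<oplus> g) = Y"
  using ax_add[rule_format, of f X Y g] unfolding hom_def by simp
lemma add_dom[simp]: "dm f = dm g \<Longrightarrow> cd f = cd g \<Longrightarrow> dm (f \<oplus> g) = dm f"
  using add_hom[of f "dm f" "cd f" g] by argo
lemma add_cod[simp]: "dm f = dm g \<Longrightarrow> cd f = cd g \<Longrightarrow> cd (f \<oplus> g) = cd f"
  using add_hom[of f "dm f" "cd f" g] by argo
lemma add_zr: "dm f = X \<Longrightarrow> cd f = Y \<Longrightarrow> f \<oplus> zr X Y = f"
  using ax_zr[rule_format, of f X Y] unfolding hom_def by simp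
lemma add_assoc: "dm f = X \<Longrightarrow> cd f = Y \<Longrightarrow> dm g = X \<Longrightarrow> cd g = Y \<Longrightarrow> dm h = X \<Longrightarrow> cd h = Y \<Longrightarrow>
   (f \<oplus> g) \<oplus> h = f \<oplus> (g \<oplus> h)"
  using ax_assoc[rule_format, of f X Y g h] unfolding hom_def by simp
lemma add_neg: "dm f = X \<Longrightarrow> cd f = Y \<Longrightarrow> f \<oplus> mneg C f = zr X Y"
  using ax_negz[rule_format, of f X Y] unfolding hom_def by simp
lemma neg_hom: "dm f = X \<Longrightarrow> cd f = Y \<Longrightarrow> dm (mneg C f) = X \<and> cd (mneg C f) = Y"
  using ax_neg[rule_format, of f X Y] unfolding hom_def by simp
lemma cp_add_r: "dm g = Y \<Longrightarrow> cd g = Z \<Longrightarrow> dm f = X \<Longrightarrow> cd f = Y \<Longrightarrow> dm f' = X \<Longrightarrow> cd f' = Y \<Longrightarrow>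
  g \<cdot> (f \<oplus> f') = (g \<cdot> f) \<oplus> (g \<cdot> f')"
  using ax_cpr[rule_format, of f X Y f' g Z] unfolding hom_def by simp
lemma cp_add_l: "dm g = Y \<Longrightarrow> cd g = Z \<Longrightarrow> dm g' = Y \<Longrightarrow> cd g' = Z \<Longrightarrow> dm f = X \<Longrightarrow> cd f = Y \<Longrightarrow>
  (g \<oplus> g') \<cdot> f = (g \<cdot> f) \<oplus> (g' \<cdot> f)"
  using ax_cpl[rule_format, of f X Y g Z g'] unfolding hom_def by simp
lemma tn_add_l: "dm f = X \<Longrightarrow> cd f = Y \<Longrightarrow> dm f' = X \<Longrightarrow> cd f' = Y \<Longrightarrow>
  (f \<oplus> f') \<otimes> g = (f \<otimes> g) \<oplus> (f' \<otimes> g)"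
  using ax_tnl[rule_format, of f X Y f' g "dm g" "cd g"] unfolding hom_def by simp
lemma tn_add_r: "dm g = X \<Longrightarrow> cd g = Y \<Longrightarrow> dm g' = X \<Longrightarrow> cd g' = Y \<Longrightarrow>
  f \<otimes> (g \<oplus> g') = (f \<otimes> g) \<oplus> (f \<otimes> g')"
  using ax_tnr[rule_format, of f "dm f" "cd f" g X Y g'] unfolding hom_def by simp

text \<open>In an abelian group, x + y = y forces x = 0; this yields all the zero laws below.\<close>
lemma cancel0:
  assumes "dm x = X" "cd x = Y" "dm y = X" "cd y = Y" "x \<oplus> y = y"
  shows "x = zr X Y"
proof -
  have n: "dm (mneg C y) = X" "cd (mneg C y) = Y" using neg_hom[OF assms(3,4)] by auto
  have "x = x \<oplus> (y \<oplus> mneg C y)" using assms by (simp add: add_neg add_zr)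
  also have "\<dots> = (x \<oplus> y) \<oplus> mneg C y" using add_assoc[OF assms(1-4) n] by simp
  also have "\<dots> = zr X Y" using assms by (simp add: add_neg)
  finally show ?thesis .
qed

lemma cancel1: "dm x = X \<Longrightarrow> cd x = Y \<Longrightarrow> x \<oplus> x = x \<Longrightarrow> x = zr X Y"
  by (rule cancel0)

lemma zr_zr: "zr X Y \<oplus> zr X Y = zr X Y" by (simp add: add_zr)

lemma cp_zr_r[simp]: "dm g = Y \<Longrightarrow> g \<cdot> zr X Y = zr X (cd g)"
  by (rule cancel1) (simp_all add: zr_zr cp_add_r[of g Y "cd g" "zr X Y" X "zr X Y", symmetric])
lemma cp_zr_l[simp]: "cd f = Y \<Longrightarrow> zr Y Z \<cdot> f = zr (dm f) Z"
  by (rule cancel1) (simp_all add: zr_zr cp_add_l[of "zr Y Z" Y Z "zr Y Z" f "dm f", symmetric])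
lemma tn_zr_l[simp]: "zr X Y \<otimes> g = zr (X \<odot> dm g) (Y \<odot> cd g)"
  by (rule cancel1) (simp_all add: zr_zr tn_add_l[of "zr X Y" X Y "zr X Y" g, symmetric])
lemma tn_zr_r[simp]: "g \<otimes> zr X Y = zr (dm g \<odot> X) (cd g \<odot> Y)"
  by (rule cancel1) (simp_all add: zr_zr tn_add_r[of "zr X Y" X Y "zr X Y" g, symmetric])

lemmas field_axioms = gf[unfolded ground_field_def]

lemma sc_hom[simp]: "dm (sc c) = U" "cd (sc c) = U"
  using field_axioms bij_betwE[of sc UNIV "hom C U U"] unfolding hom_def by auto
lemma sc_add: "sc (a + b) = sc a \<oplus> sc b" using field_axioms by blast
lemma sc_mult: "sc (a * b) = sc a \<cdot> sc b" using field_axioms by blast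
lemma sc_1: "sc 1 = idm U" using field_axioms by blast
lemma sc_comm: "f \<otimes> (sc c \<otimes> g) = sc c \<otimes> (f \<otimes> g)" using field_axioms by blast
lemma sc_swap: "f \<otimes> sc c = sc c \<otimes> f" using sc_comm[of f c "idm U"] by simp
lemma sc_0: "sc 0 = zr U U"
  by (rule cancel1) (simp_all add: sc_add[symmetric])
lemma sc_tn: "sc a \<otimes> sc b = sc (a * b)"
  using interchange[of "sc a" "idm U" "idm U" "sc b"] by (simp add: sc_mult)

abbreviation sm where "sm c f \<equiv> smult C sc c f"

lemma sm_def: "sm c f = sc c \<otimes> f" by (simp add: smult_def)
lemma sm_dom[simp]: "dm (sm c f) = dm f" and sm_cod[simp]: "cd (sm c f) = cd f"
  by (simp_all add: sm_def)
lemma sm_sm: "sm c (sm d f) = sm (c * d) f" by (simp add: sm_def sc_tn[symmetric])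
lemma sm_1: "sm 1 f = f" by (simp add: sm_def sc_1)
lemma sm_add: "sm (c + d) f = sm c f \<oplus> sm d f"
  unfolding sm_def sc_add by (rule tn_add_l[of _ U U]) simp_all
lemma sm_0: "sm 0 f = zr (dm f) (cd f)" by (simp add: sm_def sc_0)
lemma sm_zr: "sm c (zr X Y) = zr X Y" by (simp add: sm_def)

lemmas psi_axioms = ps[unfolded psi_system_def hom_def, simplified]

lemma st_st[simp]: "st (st i) = i" using psi_axioms by auto
lemma bb_dom[simp]: "dm (bb i) = U" and bb_cod[simp]: "cd (bb i) = V i \<odot> V (st i)"
  using psi_axioms by auto
lemma dd_dom[simp]: "dm (dd i) = V i \<odot> V (st i)" and dd_cod[simp]: "cd (dd i) = U"
  using psi_axioms by auto
lemma zig1: "(idm (V i) \<otimes> dd (st i)) \<cdot> (bb i \<otimes> idm (V i)) = idm (V i)" using psi_axioms by auto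
lemma zig2: "(dd i \<otimes> idm (V i)) \<cdot> (idm (V i) \<otimes> bb (st i)) = idm (V i)" using psi_axioms by auto
lemma orth: "i \<noteq> j \<Longrightarrow> dm f = V i \<Longrightarrow> cd f = V j \<Longrightarrow> f = zr (V i) (V j)"
  using psi_axioms by (auto simp: set_eq_iff)
lemma simpleV: "simple_obj C sc (V i)" using ps unfolding psi_system_def by auto
lemma idV_nz: "idm (V i) \<noteq> zr (V i) (V i)" using simpleV unfolding simple_obj_def by auto

text \<open>Scalars act faithfully on a simple object, so the bracket is well defined and
  injective; it is what turns equalities of values of T into equalities of morphisms.\<close>
lemma sm_uniq:
  assumes "sm c (idm (V i)) = sm d (idm (V i))"
  shows "c = d"
proof (rule ccontr)
  assume ne: "c \<noteq> d"
  let ?I = "idm (V i)"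
  have "sm c ?I = sm (c - d) ?I \<oplus> sm d ?I" by (simp add: sm_add[symmetric])
  hence "sm (c - d) ?I \<oplus> sm d ?I = sm d ?I" using assms by simp
  hence z: "sm (c - d) ?I = zr (V i) (V i)" by (intro cancel0[of _ _ _ "sm d ?I"]) simp_all
  have "?I = sm (inverse (c - d) * (c - d)) ?I" using ne by (simp add: sm_1)
  also have "\<dots> = zr (V i) (V i)" by (simp add: sm_sm[symmetric] z sm_zr)
  finally show False using idV_nz by blast
qed

lemma br_eq:
  assumes "dm f = V i" "cd f = V i"
  shows "f = sm (bracket C sc (V i) f) (idm (V i))"
proof -
  obtain c where c: "f = sm c (idm (V i))"
    using simpleV[of i] assms unfolding simple_obj_def hom_def by auto
  have "(THE c. f = sm c (idm (V i))) = c" by (rule the_equality) (use c sm_uniq in auto)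
  thus ?thesis unfolding bracket_def using c by simp
qed

lemma br_inj:
  assumes "dm f = V i" "cd f = V i" "dm g = V i" "cd g = V i"
    and "bracket C sc (V i) f = bracket C sc (V i) g"
  shows "f = g"
  using br_eq[OF assms(1,2)] br_eq[OF assms(3,4)] assms(5) by simp

lemma br_zr: "bracket C sc (V i) (zr (V i) (V i)) = 0"
proof -
  have "zr (V i) (V i) = sm 0 (idm (V i))" by (simp add: sm_0)
  from br_eq[of "zr (V i) (V i)" i] this show ?thesis using sm_uniq by force
qed

subsection \<open>Bending a leg with the duality morphisms\<close>

text \<open>rot X f l turns the right input leg V_l of f : X \<boxtimes> V_l \<rightarrow> Y into an output leg
  V_{l*} using b_l; unrot undoes this using d.  The zigzag identities make them
  mutually inverse bijections, natural in the codomain.\<close>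

definition rot where "rot X f l = (f \<otimes> idm (V (st l))) \<cdot> (idm X \<otimes> bb l)"
definition unrot where "unrot Y g l = (idm Y \<otimes> dd (st l)) \<cdot> (g \<otimes> idm (V l))"

lemma rot_dom[simp]: "dm f = X \<odot> V l \<Longrightarrow> dm (rot X f l) = X"
  unfolding rot_def by simp
lemma rot_cod[simp]: "dm f = X \<odot> V l \<Longrightarrow> cd (rot X f l) = cd f \<odot> V (st l)"
  unfolding rot_def by simp
lemma unrot_cod[simp]: "cd g = Y \<odot> V (st l) \<Longrightarrow> cd (unrot Y g l) = Y"
  unfolding unrot_def by simp
lemma unrot_dom[simp]: "cd g = Y \<odot> V (st l) \<Longrightarrow> dm (unrot Y g l) = dm g \<odot> V l"
  unfolding unrot_def by simp
lemma unrot_zr[simp]: "unrot Y (zr X (Y \<odot> V (st l))) l = zr (X \<odot> V l) Y"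
  unfolding unrot_def by simp
lemma unrot_rot:
  assumes "dm f = X \<odot> V l" "cd f = Y"
  shows "unrot Y (rot X f l) l = f"
proof -
  have "unrot Y (rot X f l) l = (idm Y \<otimes> dd (st l)) \<cdot> ((f \<otimes> idm (V (st l)) \<otimes> idm (V l)) \<cdot> (idm X \<otimes> bb l \<otimes> idm (V l)))"
    unfolding unrot_def rot_def using assms by (simp add: tcomp_r)
  also have "\<dots> = ((idm Y \<otimes> dd (st l)) \<cdot> (f \<otimes> idm (V (st l)) \<otimes> idm (V l))) \<cdot> (idm X \<otimes> bb l \<otimes> idm (V l))"
    using assms by (simp add: cp_assoc)
  also have "(idm Y \<otimes> dd (st l)) \<cdot> (f \<otimes> idm (V (st l)) \<otimes> idm (V l)) = f \<otimes> dd (st l)"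
    using assms interchange[of "idm Y" f "dd (st l)" "idm (V (st l) \<odot> V l)"] by simp
  also have "f \<otimes> dd (st l) = f \<cdot> (idm X \<otimes> idm (V l) \<otimes> dd (st l))"
    using assms interchange[of f "idm (X \<odot> V l)" "idm U" "dd (st l)"] by simp
  also have "(f \<cdot> (idm X \<otimes> idm (V l) \<otimes> dd (st l))) \<cdot> (idm X \<otimes> bb l \<otimes> idm (V l))
      = f \<cdot> ((idm X \<otimes> idm (V l) \<otimes> dd (st l)) \<cdot> (idm X \<otimes> bb l \<otimes> idm (V l)))"
    using assms by (simp add: cp_assoc)
  also have "(idm X \<otimes> idm (V l) \<otimes> dd (st l)) \<cdot> (idm X \<otimes> bb l \<otimes> idm (V l)) = idm X \<otimes> idm (V l)"
    using interchange[of "idm X" "idm X" "idm (V l) \<otimes> dd (st l)" "bb l \<otimes> idm (V l)"] zig1[of l] by simp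
  finally show ?thesis using assms by simp
qed

lemma rot_unrot:
  assumes "cd g = Y \<odot> V (st l)" "dm g = X"
  shows "rot X (unrot Y g l) l = g"
proof -
  have "rot X (unrot Y g l) l = ((idm Y \<otimes> dd (st l) \<otimes> idm (V (st l))) \<cdot> (g \<otimes> idm (V l) \<otimes> idm (V (st l)))) \<cdot> (idm X \<otimes> bb l)"
    unfolding unrot_def rot_def using assms by (simp add: tcomp_r)
  also have "\<dots> = (idm Y \<otimes> dd (st l) \<otimes> idm (V (st l))) \<cdot> ((g \<otimes> idm (V l) \<otimes> idm (V (st l))) \<cdot> (idm X \<otimes> bb l))"
    using assms by (simp add: cp_assoc)
  also have "(g \<otimes> idm (V l) \<otimes> idm (V (st l))) \<cdot> (idm X \<otimes> bb l) = g \<otimes> bb l"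
    using assms interchange[of g "idm X" "idm (V l \<odot> V (st l))" "bb l"] by simp
  also have "g \<otimes> bb l = (idm Y \<otimes> idm (V (st l)) \<otimes> bb l) \<cdot> g"
    using assms interchange[of "idm (Y \<odot> V (st l))" g "bb l" "idm U"] by simp
  also have "(idm Y \<otimes> dd (st l) \<otimes> idm (V (st l))) \<cdot> ((idm Y \<otimes> idm (V (st l)) \<otimes> bb l) \<cdot> g)
     = ((idm Y \<otimes> dd (st l) \<otimes> idm (V (st l))) \<cdot> (idm Y \<otimes> idm (V (st l)) \<otimes> bb l)) \<cdot> g"
    using assms by (simp add: cp_assoc)
  also have "(idm Y \<otimes> dd (st l) \<otimes> idm (V (st l))) \<cdot> (idm Y \<otimes> idm (V (st l)) \<otimes> bb l) = idm Y \<otimes> idm (V (st l))"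
    using interchange[of "idm Y" "idm Y" "dd (st l) \<otimes> idm (V (st l))" "idm (V (st l)) \<otimes> bb l"] zig2[of "st l"] by simp
  finally show ?thesis using assms by simp
qed

lemma rot_nat:
  assumes "dm p = cd f" "dm f = X \<odot> V l"
  shows "rot X (p \<cdot> f) l = (p \<otimes> idm (V (st l))) \<cdot> rot X f l"
  unfolding rot_def using assms by (simp add: tcomp_r cp_assoc)

lemma unrot_nat:
  assumes "cd G = Z \<odot> V (st l)" "dm p = Z"
  shows "unrot (cd p) ((p \<otimes> idm (V (st l))) \<cdot> G) l = p \<cdot> unrot Z G l"
proof -
  have "unrot (cd p) ((p \<otimes> idm (V (st l))) \<cdot> G) l = ((idm (cd p) \<otimes> dd (st l)) \<cdot> (p \<otimes> idm (V (st l)) \<otimes> idm (V l))) \<cdot> (G \<otimes> idm (V l))"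
    unfolding unrot_def using assms by (simp add: tcomp_r cp_assoc)
  also have "(idm (cd p) \<otimes> dd (st l)) \<cdot> (p \<otimes> idm (V (st l)) \<otimes> idm (V l)) = p \<otimes> dd (st l)"
    using assms interchange[of "idm (cd p)" p "dd (st l)" "idm (V (st l) \<odot> V l)"] by simp
  also have "p \<otimes> dd (st l) = p \<cdot> (idm Z \<otimes> dd (st l))"
    using assms interchange[of p "idm Z" "idm U" "dd (st l)"] by simp
  finally show ?thesis unfolding unrot_def using assms by (simp add: cp_assoc)
qed

lemma rotU: "dm x = V n \<Longrightarrow> rot U x n = (x \<otimes> idm (V (st n))) \<cdot> bb n"
  unfolding rot_def by simp

text \<open>A cup b_j can be slid through a morphism out of V_n whose left output is V_j.\<close>
lemma cup_slide:
  assumes x: "dm x = V n" "cd x = V j \<odot> V b"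
  shows "(idm (V j) \<otimes> ((dd (st j) \<otimes> idm (V b \<odot> V (st n))) \<cdot> (idm (V (st j)) \<otimes> rot U x n))) \<cdot> bb j = rot U x n"
proof -
  let ?R = "rot U x n"
  have R: "dm ?R = U" "cd ?R = V j \<odot> V b \<odot> V (st n)" using x by simp_all
  have "(idm (V j) \<otimes> ((dd (st j) \<otimes> idm (V b \<odot> V (st n))) \<cdot> (idm (V (st j)) \<otimes> ?R))) \<cdot> bb j
     = ((idm (V j) \<otimes> dd (st j) \<otimes> idm (V b \<odot> V (st n))) \<cdot> (idm (V j) \<otimes> idm (V (st j)) \<otimes> ?R)) \<cdot> bb j"
    using R by (simp add: tcomp_l)
  also have "\<dots> = (idm (V j) \<otimes> dd (st j) \<otimes> idm (V b \<odot> V (st n))) \<cdot> ((idm (V j) \<otimes> idm (V (st j)) \<otimes> ?R) \<cdot> bb j)"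
    using R by (simp add: cp_assoc)
  also have "(idm (V j) \<otimes> idm (V (st j)) \<otimes> ?R) \<cdot> bb j = bb j \<otimes> ?R"
    using R interchange[of "idm (V j \<odot> V (st j))" "bb j" ?R "idm U"] by simp
  also have "bb j \<otimes> ?R = (bb j \<otimes> idm (V j \<odot> V b \<odot> V (st n))) \<cdot> ?R"
    using R interchange[of "bb j" "idm U" "idm (V j \<odot> V b \<odot> V (st n))" ?R] by simp
  also have "(idm (V j) \<otimes> dd (st j) \<otimes> idm (V b \<odot> V (st n))) \<cdot> ((bb j \<otimes> idm (V j \<odot> V b \<odot> V (st n))) \<cdot> ?R)
     = ((idm (V j) \<otimes> dd (st j) \<otimes> idm (V b \<odot> V (st n))) \<cdot> (bb j \<otimes> idm (V j \<odot> V b \<odot> V (st n)))) \<cdot> ?R"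
    using R by (simp add: cp_assoc)
  also have "(idm (V j) \<otimes> dd (st j) \<otimes> idm (V b \<odot> V (st n))) \<cdot> (bb j \<otimes> idm (V j \<odot> V b \<odot> V (st n)))
     = ((idm (V j) \<otimes> dd (st j)) \<cdot> (bb j \<otimes> idm (V j))) \<otimes> idm (V b \<odot> V (st n))"
    using interchange[of "idm (V j) \<otimes> dd (st j)" "bb j \<otimes> idm (V j)" "idm (V b \<odot> V (st n))" "idm (V b \<odot> V (st n))"]
    by simp
  also have "\<dots> = idm (V j \<odot> V b \<odot> V (st n))" using zig1[of j] by simp
  finally show ?thesis using R by simp
qed

text \<open>For x : V_n \<rightarrow> V_j \<boxtimes> V_b, bend_left turns the output V_j into an input V_{j*} and the
  input V_n into an output V_{n*}; bend_right turns the input V_n into a left output V_{n*}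
  and the output V_l of x : V_n \<rightarrow> V_b \<boxtimes> V_l into an input V_{l*}.  They describe how the
  lower and upper halves of a tree behave under bending (rot_lower_tree, unrot_upper_tree).\<close>

definition bend_left where "bend_left j b n x = (dd (st j) \<otimes> idm (V b \<odot> V (st n))) \<cdot> (idm (V (st j)) \<otimes> rot U x n)"
lemma bend_left_dom[simp]: "dm x = V n \<Longrightarrow> cd x = V j \<odot> V b \<Longrightarrow> dm (bend_left j b n x) = V (st j)"
  unfolding bend_left_def by simp
lemma bend_left_cod[simp]: "dm x = V n \<Longrightarrow> cd x = V j \<odot> V b \<Longrightarrow> cd (bend_left j b n x) = V b \<odot> V (st n)"
  unfolding bend_left_def by simp

lemma rot_lower_tree:
  assumes v: "dm v = V i \<odot> V j" "cd v = V a" and x: "dm x = V n" "cd x = V j \<odot> V b"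
  shows "rot (V i) ((v \<otimes> idm (V b)) \<cdot> (idm (V i) \<otimes> x)) n = (idm (V a) \<otimes> bend_left j b n x) \<cdot> rot (V i) v j"
proof -
  have "rot (V i) ((v \<otimes> idm (V b)) \<cdot> (idm (V i) \<otimes> x)) n
      = (v \<otimes> idm (V b) \<otimes> idm (V (st n))) \<cdot> ((idm (V i) \<otimes> x \<otimes> idm (V (st n))) \<cdot> (idm (V i) \<otimes> bb n))"
    unfolding rot_def using v x by (simp add: tcomp_r cp_assoc)
  also have "(idm (V i) \<otimes> x \<otimes> idm (V (st n))) \<cdot> (idm (V i) \<otimes> bb n) = idm (V i) \<otimes> rot U x n"
    using x by (simp add: rotU tcomp_l)
  finally have L: "rot (V i) ((v \<otimes> idm (V b)) \<cdot> (idm (V i) \<otimes> x)) n = (v \<otimes> idm (V b) \<otimes> idm (V (st n))) \<cdot> (idm (V i) \<otimes> rot U x n)" .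
  have "(idm (V a) \<otimes> bend_left j b n x) \<cdot> rot (V i) v j
     = (idm (V a) \<otimes> bend_left j b n x) \<cdot> ((v \<otimes> idm (V (st j))) \<cdot> (idm (V i) \<otimes> bb j))"
    unfolding rot_def ..
  also have "\<dots> = ((idm (V a) \<otimes> bend_left j b n x) \<cdot> (v \<otimes> idm (V (st j)))) \<cdot> (idm (V i) \<otimes> bb j)"
    using v x by (simp add: cp_assoc)
  also have "(idm (V a) \<otimes> bend_left j b n x) \<cdot> (v \<otimes> idm (V (st j))) = v \<otimes> bend_left j b n x"
    using v x interchange[of "idm (V a)" v "bend_left j b n x" "idm (V (st j))"] by simp
  also have "v \<otimes> bend_left j b n x = (v \<otimes> idm (V b \<odot> V (st n))) \<cdot> (idm (V i) \<otimes> idm (V j) \<otimes> bend_left j b n x)"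
    using v x interchange[of v "idm (V i \<odot> V j)" "idm (V b \<odot> V (st n))" "bend_left j b n x"] by simp
  also have "((v \<otimes> idm (V b \<odot> V (st n))) \<cdot> (idm (V i) \<otimes> idm (V j) \<otimes> bend_left j b n x)) \<cdot> (idm (V i) \<otimes> bb j)
    = (v \<otimes> idm (V b \<odot> V (st n))) \<cdot> ((idm (V i) \<otimes> idm (V j) \<otimes> bend_left j b n x) \<cdot> (idm (V i) \<otimes> bb j))"
    using v x by (simp add: cp_assoc)
  also have "(idm (V i) \<otimes> idm (V j) \<otimes> bend_left j b n x) \<cdot> (idm (V i) \<otimes> bb j)
     = idm (V i) \<otimes> ((idm (V j) \<otimes> bend_left j b n x) \<cdot> bb j)"
    using v x by (simp add: tcomp_l)
  also have "(idm (V j) \<otimes> bend_left j b n x) \<cdot> bb j = rot U x n"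
    unfolding bend_left_def by (rule cup_slide[OF x])
  finally show ?thesis using v x L by simp
qed

definition bend_right where "bend_right n b l x = (idm (V (st n)) \<otimes> unrot (V b) x (st l)) \<cdot> (bb (st n) \<otimes> idm (V (st l)))"
lemma bend_right_dom[simp]: "dm x = V n \<Longrightarrow> cd x = V b \<odot> V l \<Longrightarrow> dm (bend_right n b l x) = V (st l)"
  unfolding bend_right_def by simp
lemma bend_right_cod[simp]: "dm x = V n \<Longrightarrow> cd x = V b \<odot> V l \<Longrightarrow> cd (bend_right n b l x) = V (st n) \<odot> V b"
  unfolding bend_right_def by simp

lemma unrot_upper_tree:
  assumes x: "dm x = V n" "cd x = V b \<odot> V l" and y: "dm y = V m" "cd y = V a \<odot> V n"
  shows "unrot (V a \<odot> V b) ((idm (V a) \<otimes> x) \<cdot> y) (st l)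
     = (unrot (V a) y (st n) \<otimes> idm (V b)) \<cdot> (idm (V m) \<otimes> bend_right n b l x)"
proof -
  let ?xt = "unrot (V b) x (st l)" and ?v = "unrot (V a) y (st n)"
  have xt: "dm ?xt = V n \<odot> V (st l)" "cd ?xt = V b" using x by simp_all
  have vt: "dm ?v = V m \<odot> V (st n)" "cd ?v = V a" using y by simp_all
  have "unrot (V a \<odot> V b) ((idm (V a) \<otimes> x) \<cdot> y) (st l)
     = (idm (V a) \<otimes> idm (V b) \<otimes> dd l) \<cdot> (((idm (V a) \<otimes> x) \<otimes> idm (V (st l))) \<cdot> (y \<otimes> idm (V (st l))))"
    unfolding unrot_def using x y by (simp add: tcomp_r)
  also have "\<dots> = ((idm (V a) \<otimes> idm (V b) \<otimes> dd l) \<cdot> (idm (V a) \<otimes> x \<otimes> idm (V (st l)))) \<cdot> (y \<otimes> idm (V (st l)))"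
    using x y by (simp add: cp_assoc)
  also have "(idm (V a) \<otimes> idm (V b) \<otimes> dd l) \<cdot> (idm (V a) \<otimes> x \<otimes> idm (V (st l))) = idm (V a) \<otimes> ?xt"
    unfolding unrot_def using x by (simp add: tcomp_l)
  finally have L: "unrot (V a \<odot> V b) ((idm (V a) \<otimes> x) \<cdot> y) (st l) = (idm (V a) \<otimes> ?xt) \<cdot> (y \<otimes> idm (V (st l)))" .
  have "(?v \<otimes> idm (V b)) \<cdot> (idm (V m) \<otimes> bend_right n b l x)
     = (?v \<otimes> idm (V b)) \<cdot> ((idm (V m) \<otimes> idm (V (st n)) \<otimes> ?xt) \<cdot> (idm (V m) \<otimes> bb (st n) \<otimes> idm (V (st l))))"
    unfolding bend_right_def using x y by (simp add: tcomp_l)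
  also have "\<dots> = ((?v \<otimes> idm (V b)) \<cdot> (idm (V m) \<otimes> idm (V (st n)) \<otimes> ?xt)) \<cdot> (idm (V m) \<otimes> bb (st n) \<otimes> idm (V (st l)))"
    using xt vt by (simp add: cp_assoc)
  also have "(?v \<otimes> idm (V b)) \<cdot> (idm (V m) \<otimes> idm (V (st n)) \<otimes> ?xt) = ?v \<otimes> ?xt"
    using xt vt interchange[of ?v "idm (V m \<odot> V (st n))" "idm (V b)" ?xt] by simp
  also have "?v \<otimes> ?xt = (idm (V a) \<otimes> ?xt) \<cdot> (?v \<otimes> idm (V n) \<otimes> idm (V (st l)))"
    using xt vt interchange[of "idm (V a)" ?v ?xt "idm (V n \<odot> V (st l))"] by simp
  also have "((idm (V a) \<otimes> ?xt) \<cdot> (?v \<otimes> idm (V n) \<otimes> idm (V (st l)))) \<cdot> (idm (V m) \<otimes> bb (st n) \<otimes> idm (V (st l)))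
    = (idm (V a) \<otimes> ?xt) \<cdot> ((?v \<otimes> idm (V n) \<otimes> idm (V (st l))) \<cdot> (idm (V m) \<otimes> bb (st n) \<otimes> idm (V (st l))))"
    using xt vt by (simp add: cp_assoc)
  also have "(?v \<otimes> idm (V n) \<otimes> idm (V (st l))) \<cdot> (idm (V m) \<otimes> bb (st n) \<otimes> idm (V (st l)))
     = rot (V m) ?v (st n) \<otimes> idm (V (st l))"
    unfolding rot_def using xt vt by (simp add: tcomp_r)
  also have "rot (V m) ?v (st n) = y" using y by (intro rot_unrot) simp_all
  finally show ?thesis using L by simp
qed

subsection \<open>Decompositions of the identity through simple objects\<close>

text \<open>A list of triples (k, x, y) with x : V_k \<rightarrow> X and y : X \<rightarrow> V_k, and the sum of the
  composites x \<circ> y; axiom (4) of a \<Psi>-system says that for X = V_i \<boxtimes> V_j this sum can be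
  made the identity as soon as some V_k maps nontrivially into X.\<close>
abbreviation dsum where "dsum ts X \<equiv> foldr (\<lambda>(k, x, y) acc. x \<cdot> y \<oplus> acc) ts (zr X X)"
definition factor_list where "factor_list ts X \<longleftrightarrow> (\<forall>(k, x, y)\<in>set ts. dm x = V k \<and> cd x = X \<and> dm y = X \<and> cd y = V k)"

lemma dsum_hom: "factor_list ts X \<Longrightarrow> dm (dsum ts X) = X \<and> cd (dsum ts X) = X"
  by (induction ts) (auto simp: factor_list_def)

lemma dsum_cong_l:
  assumes "factor_list ts X" "dm g1 = X" "dm g2 = X" "cd g1 = cd g2"
    "\<forall>(k, x, y)\<in>set ts. g1 \<cdot> (x \<cdot> y) = g2 \<cdot> (x \<cdot> y)"
  shows "g1 \<cdot> dsum ts X = g2 \<cdot> dsum ts X"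
  using assms
proof (induction ts)
  case Nil thus ?case by simp
next
  case (Cons t ts)
  obtain k x y where t: "t = (k, x, y)" by (cases t) auto
  have tt: "dm x = V k" "cd x = X" "dm y = X" "cd y = V k" "factor_list ts X" using Cons.prems(1) by (auto simp: factor_list_def t)
  have r: "dm (dsum ts X) = X" "cd (dsum ts X) = X" using dsum_hom[OF tt(5)] by auto
  have ih: "g1 \<cdot> dsum ts X = g2 \<cdot> dsum ts X" using Cons tt by auto
  have e: "g1 \<cdot> (x \<cdot> y) = g2 \<cdot> (x \<cdot> y)" using Cons.prems(5) t by auto
  have "g1 \<cdot> dsum (t # ts) X = g1 \<cdot> (x \<cdot> y) \<oplus> g1 \<cdot> dsum ts X"
    using tt r Cons.prems by (simp add: t cp_add_r[of g1 X "cd g1" "x \<cdot> y" X])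
  also have "\<dots> = g2 \<cdot> (x \<cdot> y) \<oplus> g2 \<cdot> dsum ts X" using e ih by simp
  also have "\<dots> = g2 \<cdot> dsum (t # ts) X"
    using tt r Cons.prems by (simp add: t cp_add_r[of g2 X "cd g2" "x \<cdot> y" X])
  finally show ?case .
qed

lemma dsum_cong_r:
  assumes "factor_list ts X" "cd h1 = X" "cd h2 = X" "dm h1 = dm h2"
    "\<forall>(k, x, y)\<in>set ts. (x \<cdot> y) \<cdot> h1 = (x \<cdot> y) \<cdot> h2"
  shows "dsum ts X \<cdot> h1 = dsum ts X \<cdot> h2"
  using assms
proof (induction ts)
  case Nil thus ?case by simp
next
  case (Cons t ts)
  obtain k x y where t: "t = (k, x, y)" by (cases t) auto
  have tt: "dm x = V k" "cd x = X" "dm y = X" "cd y = V k" "factor_list ts X" using Cons.prems(1) by (auto simp: factor_list_def t)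
  have r: "dm (dsum ts X) = X" "cd (dsum ts X) = X" using dsum_hom[OF tt(5)] by auto
  have ih: "dsum ts X \<cdot> h1 = dsum ts X \<cdot> h2" using Cons tt by auto
  have e: "(x \<cdot> y) \<cdot> h1 = (x \<cdot> y) \<cdot> h2" using Cons.prems(5) t by auto
  have "dsum (t # ts) X \<cdot> h1 = (x \<cdot> y) \<cdot> h1 \<oplus> dsum ts X \<cdot> h1"
    using tt r Cons.prems by (simp add: t cp_add_l[of "x \<cdot> y" X X _ h1 "dm h1"])
  also have "\<dots> = (x \<cdot> y) \<cdot> h2 \<oplus> dsum ts X \<cdot> h2" using e ih by simp
  also have "\<dots> = dsum (t # ts) X \<cdot> h2"
    using tt r Cons.prems by (simp add: t cp_add_l[of "x \<cdot> y" X X _ h2 "dm h2"])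
  finally show ?case .
qed

lemma psi_axiom4: "\<forall>i j. (\<exists>k. hom C (V k) (V i \<odot> V j) \<noteq> {zr (V k) (V i \<odot> V j)}) \<longrightarrow>
       (\<exists>ts :: ('i \<times> 'm \<times> 'm) list.
          (\<forall>(k, x, y)\<in>set ts. x \<in> hom C (V k) (V i \<odot> V j) \<and> y \<in> hom C (V i \<odot> V j) (V k)) \<and>
          dsum ts (V i \<odot> V j) = idm (V i \<odot> V j))"
  using ps unfolding psi_system_def by (elim conjE) assumption

lemma decomp:
  assumes "dm f = V k" "cd f = V i \<odot> V j" "f \<noteq> zr (V k) (V i \<odot> V j)"
  obtains ts where "factor_list ts (V i \<odot> V j)" "dsum ts (V i \<odot> V j) = idm (V i \<odot> V j)"
proof -
  have "hom C (V k) (V i \<odot> V j) \<noteq> {zr (V k) (V i \<odot> V j)}" using assms unfolding hom_def by auto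
  then obtain ts where "(\<forall>(k, x, y)\<in>set ts. x \<in> hom C (V k) (V i \<odot> V j) \<and> y \<in> hom C (V i \<odot> V j) (V k))"
     "dsum ts (V i \<odot> V j) = idm (V i \<odot> V j)" using psi_axiom4 by blast
  thus ?thesis using that unfolding factor_list_def hom_def by auto
qed


lemma eq_if_eq_on_simples_l:
  assumes nz: "dm f = V k" "cd f = V i \<odot> V j" "f \<noteq> zr (V k) (V i \<odot> V j)"
    and g: "dm g1 = V i \<odot> V j" "dm g2 = V i \<odot> V j" "cd g1 = cd g2"
    and eq: "\<And>k x. dm x = V k \<Longrightarrow> cd x = V i \<odot> V j \<Longrightarrow> g1 \<cdot> x = g2 \<cdot> x"
  shows "g1 = g2"
proof -
  obtain ts where ts: "factor_list ts (V i \<odot> V j)" "dsum ts (V i \<odot> V j) = idm (V i \<odot> V j)"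
    using decomp[OF nz] by blast
  have "g1 \<cdot> dsum ts (V i \<odot> V j) = g2 \<cdot> dsum ts (V i \<odot> V j)"
  proof (rule dsum_cong_l[OF ts(1) g])
    show "\<forall>(k, x, y)\<in>set ts. g1 \<cdot> (x \<cdot> y) = g2 \<cdot> (x \<cdot> y)"
    proof clarify
      fix k x y assume "(k, x, y) \<in> set ts"
      hence t: "dm x = V k" "cd x = V i \<odot> V j" "dm y = V i \<odot> V j" "cd y = V k"
        using ts(1) unfolding factor_list_def by auto
      thus "g1 \<cdot> (x \<cdot> y) = g2 \<cdot> (x \<cdot> y)" using eq[OF t(1,2)] g by (simp add: cp_assoc)
    qed
  qed
  thus ?thesis using ts(2) g by simp
qed

lemma eq_if_eq_on_simples_r:
  assumes h: "dm h1 = V m" "dm h2 = V m" "cd h1 = V i \<odot> V j" "cd h2 = V i \<odot> V j"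
    and eq: "\<And>k y. dm y = V i \<odot> V j \<Longrightarrow> cd y = V k \<Longrightarrow> y \<cdot> h1 = y \<cdot> h2"
  shows "h1 = h2"
proof (cases "h1 = zr (V m) (V i \<odot> V j) \<and> h2 = zr (V m) (V i \<odot> V j)")
  case False
  then obtain h where "dm h = V m" "cd h = V i \<odot> V j" "h \<noteq> zr (V m) (V i \<odot> V j)"
    using h by blast
  then obtain ts where ts: "factor_list ts (V i \<odot> V j)" "dsum ts (V i \<odot> V j) = idm (V i \<odot> V j)"
    by (rule decomp)
  have "dsum ts (V i \<odot> V j) \<cdot> h1 = dsum ts (V i \<odot> V j) \<cdot> h2"
  proof (rule dsum_cong_r[OF ts(1)])
    show "\<forall>(k, x, y)\<in>set ts. (x \<cdot> y) \<cdot> h1 = (x \<cdot> y) \<cdot> h2"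
    proof clarify
      fix k x y assume "(k, x, y) \<in> set ts"
      hence t: "dm x = V k" "cd x = V i \<odot> V j" "dm y = V i \<odot> V j" "cd y = V k"
        using ts(1) unfolding factor_list_def by auto
      thus "(x \<cdot> y) \<cdot> h1 = (x \<cdot> y) \<cdot> h2" using eq[OF t(3,4)] h by (simp add: cp_assoc[symmetric])
    qed
  qed (use h in simp_all)
  thus ?thesis using ts(2) h by simp
qed simp

text \<open>If some simple object receives a nonzero morphism out of V_i \<boxtimes> V_j, then some simple
  object maps nontrivially into V_i \<boxtimes> V_j: bend the leg V_j of the given morphism and
  test the result against morphisms into simple objects.  This makes axiom (4) self-dual.\<close>
lemma out_in:
  assumes f: "dm f = V i \<odot> V j" "cd f = V k" "f \<noteq> zr (V i \<odot> V j) (V k)"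
  shows "\<exists>k' g. dm g = V k' \<and> cd g = V i \<odot> V j \<and> g \<noteq> zr (V k') (V i \<odot> V j)"
proof -
  let ?R = "rot (V i) f j"
  have R: "dm ?R = V i" "cd ?R = V k \<odot> V (st j)" using f by simp_all
  have "?R \<noteq> zr (V i) (V k \<odot> V (st j))"
    using unrot_rot[of f "V i" j "V k"] f by auto
  then obtain k' yt where t: "dm yt = V k \<odot> V (st j)" "cd yt = V k'"
    and nz: "yt \<cdot> ?R \<noteq> yt \<cdot> zr (V i) (V k \<odot> V (st j))"
    using eq_if_eq_on_simples_r[of ?R i "zr (V i) (V k \<odot> V (st j))" k "st j"] R by auto
  have ki: "k' = i" using orth[of i k' "yt \<cdot> ?R"] nz t R by auto
  let ?g = "rot (V k) yt (st j)"
  have "?g \<noteq> zr (V k) (V i \<odot> V j)"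
    using unrot_rot[of yt "V k" "st j" "V i"] unrot_zr[of "V i" "V k" "st j"] nz t R ki by auto
  moreover have "dm ?g = V k" "cd ?g = V i \<odot> V j" using t ki by simp_all
  ultimately show ?thesis by blast
qed

section \<open>Trees and indistinguishability\<close>

text \<open>The morphism  u \<circ> (v \<boxtimes> Id_{V_l}) \<circ> (Id_{V_i} \<boxtimes> x) \<circ> y  whose scalar is a summand of T.\<close>
definition tree where "tree i l u v x y = u \<cdot> ((v \<otimes> idm (V l)) \<cdot> ((idm (V i) \<otimes> x) \<cdot> y))"

text \<open>p1, p2 cannot be told apart in position 1, 2 (for p : V_a \<boxtimes> V_b \<rightarrow> V_c) or
  3, 4 (for p : V_c \<rightarrow> V_a \<boxtimes> V_b) of any tree.\<close>
definition indist1 where "indist1 a b c p1 p2 \<longleftrightarrow> (\<forall>i j n v x y.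
   dm v = V i \<odot> V j \<longrightarrow> cd v = V a \<longrightarrow> dm x = V n \<longrightarrow> cd x = V j \<odot> V b \<longrightarrow>
   dm y = V c \<longrightarrow> cd y = V i \<odot> V n \<longrightarrow> tree i b p1 v x y = tree i b p2 v x y)"
definition indist2 where "indist2 a b c p1 p2 \<longleftrightarrow> (\<forall>l m n u x y.
   dm u = V c \<odot> V l \<longrightarrow> cd u = V m \<longrightarrow> dm x = V n \<longrightarrow> cd x = V b \<odot> V l \<longrightarrow>
   dm y = V m \<longrightarrow> cd y = V a \<odot> V n \<longrightarrow> tree a l u p1 x y = tree a l u p2 x y)"
definition indist3 where "indist3 a b c w1 w2 \<longleftrightarrow> (\<forall>i k m u v y.
   dm u = V k \<odot> V b \<longrightarrow> cd u = V m \<longrightarrow> dm v = V i \<odot> V a \<longrightarrow> cd v = V k \<longrightarrow>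
   dm y = V m \<longrightarrow> cd y = V i \<odot> V c \<longrightarrow> tree i b u v w1 y = tree i b u v w2 y)"
definition indist4 where "indist4 a b c w1 w2 \<longleftrightarrow> (\<forall>j k l u v x.
   dm u = V k \<odot> V l \<longrightarrow> cd u = V c \<longrightarrow> dm v = V a \<odot> V j \<longrightarrow> cd v = V k \<longrightarrow>
   dm x = V b \<longrightarrow> cd x = V j \<odot> V l \<longrightarrow> tree a l u v x w1 = tree a l u v x w2)"

text \<open>Whiskering by a leg can be undone by bending it: a consequence of naturality.\<close>
lemma whisker_via_rot:
  assumes G: "cd G = Z \<odot> V l" and p: "dm p = Z"
  shows "(p \<otimes> idm (V l)) \<cdot> G = rot (dm G) (p \<cdot> unrot Z G (st l)) (st l)"
proof -
  have "unrot (cd p) ((p \<otimes> idm (V l)) \<cdot> G) (st l) = p \<cdot> unrot Z G (st l)"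
    using unrot_nat[of G Z "st l" p] G p by simp
  moreover have "rot (dm G) (unrot (cd p) ((p \<otimes> idm (V l)) \<cdot> G) (st l)) (st l) = (p \<otimes> idm (V l)) \<cdot> G"
    by (rule rot_unrot) (use G p in simp_all)
  ultimately show ?thesis by simp
qed

text \<open>Bending the leg V_l of a tree tested in position 2 yields a test in position 1.\<close>
lemma indist1_imp_indist2:
  assumes p: "dm p1 = V a \<odot> V b" "cd p1 = V c" "dm p2 = V a \<odot> V b" "cd p2 = V c"
    and q: "indist1 a b c p1 p2"
  shows "indist2 a b c p1 p2"
  unfolding indist2_def
proof (intro allI impI)
  fix l m n u x y
  assume u: "dm u = V c \<odot> V l" "cd u = V m" and x: "dm x = V n" "cd x = V b \<odot> V l"
    and y: "dm y = V m" "cd y = V a \<odot> V n"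
  let ?G = "(idm (V a) \<otimes> x) \<cdot> y"
  have G: "dm ?G = V m" "cd ?G = V a \<odot> V b \<odot> V l" using x y by simp_all
  let ?F = "unrot (V a \<odot> V b) ?G (st l)"
  have F: "dm ?F = V m \<odot> V (st l)" "cd ?F = V a \<odot> V b" using G by simp_all
  have bent: "(p \<otimes> idm (V l)) \<cdot> ?G = rot (V m) (p \<cdot> ?F) (st l)" if "dm p = V a \<odot> V b" for p
    using whisker_via_rot[of ?G "V a \<odot> V b" l p] G that by simp
  show "tree a l u p1 x y = tree a l u p2 x y"
  proof (cases "\<exists>k f. dm f = V k \<and> cd f = V m \<odot> V (st l) \<and> f \<noteq> zr (V k) (V m \<odot> V (st l))")
    case True
    then obtain k f where nz: "dm f = V k" "cd f = V m \<odot> V (st l)" "f \<noteq> zr (V k) (V m \<odot> V (st l))"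
      by blast
    have "p1 \<cdot> ?F = p2 \<cdot> ?F"
    proof (rule eq_if_eq_on_simples_l[OF nz])
      fix k xt assume t: "dm xt = V k" "cd xt = V m \<odot> V (st l)"
      show "(p1 \<cdot> ?F) \<cdot> xt = (p2 \<cdot> ?F) \<cdot> xt"
      proof (cases "k = c")
        case False
        thus ?thesis using orth[of k c "(p1 \<cdot> ?F) \<cdot> xt"] orth[of k c "(p2 \<cdot> ?F) \<cdot> xt"] t F p by simp
      next
        case True
        have e: "?F \<cdot> xt = (unrot (V a) y (st n) \<otimes> idm (V b)) \<cdot> ((idm (V m) \<otimes> bend_right n b l x) \<cdot> xt)"
          using unrot_upper_tree[OF x y] t x y by (simp add: cp_assoc)
        have "tree m b p1 (unrot (V a) y (st n)) (bend_right n b l x) xt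
            = tree m b p2 (unrot (V a) y (st n)) (bend_right n b l x) xt"
          using q unfolding indist1_def using x y t True by auto
        thus ?thesis using e t F p unfolding tree_def by (simp add: cp_assoc[symmetric])
      qed
    qed (use F p in simp_all)
    thus ?thesis using bent p unfolding tree_def by simp
  next
    case False
    have "rot (V c) u l = zr (V c) (V m \<odot> V (st l))" using False u by auto
    hence "u = zr (V c \<odot> V l) (V m)" using unrot_rot[of u "V c" l "V m"] u by simp
    thus ?thesis using G p unfolding tree_def by simp
  qed
qed

text \<open>Conversely, bending the leg V_n of a tree tested in position 1 yields a test in
  position 2.\<close>
lemma indist2_imp_indist1:
  assumes p: "dm p1 = V a \<odot> V b" "cd p1 = V c" "dm p2 = V a \<odot> V b" "cd p2 = V c"
    and q: "indist2 a b c p1 p2"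
  shows "indist1 a b c p1 p2"
  unfolding indist1_def
proof (intro allI impI)
  fix i j n v x y
  assume v: "dm v = V i \<odot> V j" "cd v = V a" and x: "dm x = V n" "cd x = V j \<odot> V b"
    and y: "dm y = V c" "cd y = V i \<odot> V n"
  let ?K = "(v \<otimes> idm (V b)) \<cdot> (idm (V i) \<otimes> x)"
  have K: "dm ?K = V i \<odot> V n" "cd ?K = V a \<odot> V b" using v x by simp_all
  let ?H = "(idm (V a) \<otimes> bend_left j b n x) \<cdot> rot (V i) v j"
  have H: "dm ?H = V i" "cd ?H = V a \<odot> V b \<odot> V (st n)" using v x by simp_all
  have bent: "rot (V i) (p \<cdot> ?K) n = (p \<otimes> idm (V (st n))) \<cdot> ?H"
    if "dm p = V a \<odot> V b" for p
    using rot_nat[of p ?K "V i" n] K rot_lower_tree[OF v x] that by simp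
  have "(p1 \<otimes> idm (V (st n))) \<cdot> ?H = (p2 \<otimes> idm (V (st n))) \<cdot> ?H"
  proof (rule eq_if_eq_on_simples_r)
    fix k yt assume t: "dm yt = V c \<odot> V (st n)" "cd yt = V k"
    show "yt \<cdot> ((p1 \<otimes> idm (V (st n))) \<cdot> ?H) = yt \<cdot> ((p2 \<otimes> idm (V (st n))) \<cdot> ?H)"
    proof (cases "k = i")
      case False
      thus ?thesis using orth[of i k "yt \<cdot> ((p1 \<otimes> idm (V (st n))) \<cdot> ?H)"]
          orth[of i k "yt \<cdot> ((p2 \<otimes> idm (V (st n))) \<cdot> ?H)"] t H p by simp
    next
      case True
      thus ?thesis using q unfolding indist2_def tree_def using x v t by auto
    qed
  qed (use H p in simp_all)
  hence "p1 \<cdot> ?K = p2 \<cdot> ?K"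
    using unrot_rot[of "p1 \<cdot> ?K" "V i" n "V c"] unrot_rot[of "p2 \<cdot> ?K" "V i" n "V c"]
      bent[OF p(1)] bent[OF p(3)] K p by simp
  thus "tree i b p1 v x y = tree i b p2 v x y"
    using K p v x y unfolding tree_def by (simp add: cp_assoc)
qed

lemma indist1_iff_indist2:
  assumes "dm p1 = V a \<odot> V b" "cd p1 = V c" "dm p2 = V a \<odot> V b" "cd p2 = V c"
  shows "indist1 a b c p1 p2 \<longleftrightarrow> indist2 a b c p1 p2"
  using indist1_imp_indist2[OF assms] indist2_imp_indist1[OF assms] by blast

lemma op_smc: "strict_monoidal_ab_cat (op_mcat C)"
  unfolding strict_monoidal_ab_cat_def op_mcat_sel hom_op_mcat
proof (intro conjI)
  show "\<forall>X. mid C X \<in> hom C X X" by (simp add: hom_def)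
  show "\<forall>f g. mcod C g = mdom C f \<longrightarrow> mcomp C f g \<in> hom C (mdom C g) (mcod C f)"
    by (simp add: hom_def)
  show "\<forall>f. mcomp C (mid C (mcod C f)) f = f \<and> mcomp C f (mid C (mdom C f)) = f" by simp
  show "\<forall>f g h. mcod C g = mdom C f \<longrightarrow> mcod C h = mdom C g \<longrightarrow> mcomp C (mcomp C f g) h = mcomp C f (mcomp C g h)"
    by (simp add: cp_assoc)
  show "\<forall>f g. mtens C g f \<in> hom C (otens C (mdom C g) (mdom C f)) (otens C (mcod C g) (mcod C f))"
    by (simp add: hom_def)
  show "\<forall>X Y. mtens C (mid C Y) (mid C X) = mid C (otens C Y X)" by simp
  show "\<forall>f f' g g'. mcod C f' = mdom C f \<longrightarrow> mcod C g' = mdom C g \<longrightarrow>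
        mtens C (mcomp C g g') (mcomp C f f') = mcomp C (mtens C g f) (mtens C g' f')"
    by (simp add: interchange)
  show "\<forall>X Y Z. otens C Z (otens C Y X) = otens C (otens C Z Y) X" by simp
  show "\<forall>X. otens C X (munit C) = X \<and> otens C (munit C) X = X" by simp
  show "\<forall>f g h. mtens C h (mtens C g f) = mtens C (mtens C h g) f" by simp
  show "\<forall>f. mtens C f (mid C (munit C)) = f \<and> mtens C (mid C (munit C)) f = f" by simp
  show "\<forall>X Y. mzero C Y X \<in> hom C Y X" using ax_zrh by blast
  show "\<forall>X Y. \<forall>f\<in>hom C Y X. \<forall>g\<in>hom C Y X. f \<oplus> g \<in> hom C Y X" by (intro allI ballI; rule ax_add[rule_format])
  show "\<forall>X Y. \<forall>f\<in>hom C Y X. mneg C f \<in> hom C Y X" by (intro allI ballI; rule ax_neg[rule_format])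
  show "\<forall>X Y. \<forall>f\<in>hom C Y X. \<forall>g\<in>hom C Y X. \<forall>h\<in>hom C Y X. (f \<oplus> g) \<oplus> h = f \<oplus> (g \<oplus> h)"
    by (intro allI ballI; rule ax_assoc[rule_format])
  show "\<forall>X Y. \<forall>f\<in>hom C Y X. \<forall>g\<in>hom C Y X. f \<oplus> g = g \<oplus> f" by (intro allI ballI; rule ax_comm[rule_format])
  show "\<forall>X Y. \<forall>f\<in>hom C Y X. f \<oplus> zr Y X = f" by (intro allI ballI; rule ax_zr[rule_format])
  show "\<forall>X Y. \<forall>f\<in>hom C Y X. f \<oplus> mneg C f = zr Y X" by (intro allI ballI; rule ax_negz[rule_format])
  show "\<forall>X Y Z. \<forall>f\<in>hom C Y X. \<forall>g\<in>hom C Z Y. \<forall>g'\<in>hom C Z Y. mcomp C f (g \<oplus> g') = mcomp C f g \<oplus> mcomp C f g'"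
    by (intro allI ballI; rule ax_cpr[rule_format])
  show "\<forall>X Y Z. \<forall>f\<in>hom C Y X. \<forall>f'\<in>hom C Y X. \<forall>g\<in>hom C Z Y. mcomp C (f \<oplus> f') g = mcomp C f g \<oplus> mcomp C f' g"
    by (intro allI ballI; rule ax_cpl[rule_format])
  show "\<forall>X Y X' Y'. \<forall>f\<in>hom C Y X. \<forall>f'\<in>hom C Y X. \<forall>g\<in>hom C Y' X'. mtens C g (f \<oplus> f') = mtens C g f \<oplus> mtens C g f'"
    by (intro allI ballI; rule ax_tnr[rule_format])
  show "\<forall>X Y X' Y'. \<forall>f\<in>hom C Y X. \<forall>g\<in>hom C Y' X'. \<forall>g'\<in>hom C Y' X'. mtens C (g \<oplus> g') f = mtens C g f \<oplus> mtens C g' f"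
    by (intro allI ballI; rule ax_tnl[rule_format])
qed

lemma op_ground_field: "ground_field (op_mcat C) sc"
  unfolding ground_field_def op_mcat_sel hom_op_mcat
proof (intro conjI allI)
  show "bij_betw sc UNIV (hom C U U)" using field_axioms by blast
  fix a b show "sc (a + b) = sc a \<oplus> sc b" by (rule sc_add)
next
  fix a b :: 'k show "sc (a * b) = sc b \<cdot> sc a" by (simp add: sc_mult[symmetric] mult.commute)
next
  show "sc 1 = idm U" by (rule sc_1)
next
  fix c f g show "(g \<otimes> sc c) \<otimes> f = (g \<otimes> f) \<otimes> sc c"
    by (simp add: sc_swap sc_comm)
qed

lemma op_decomposition:
  assumes f: "dm f = V i \<odot> V j" "cd f = V k" "f \<noteq> zr (V i \<odot> V j) (V k)"
  shows "\<exists>ts :: ('i \<times> 'm \<times> 'm) list.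
    (\<forall>(k, x, y)\<in>set ts. x \<in> hom C (V i \<odot> V j) (V k) \<and> y \<in> hom C (V k) (V i \<odot> V j)) \<and>
    foldr (\<lambda>(k, x, y). madd C (y \<cdot> x)) ts (zr (V i \<odot> V j) (V i \<odot> V j)) = idm (V i \<odot> V j)"
proof -
  obtain k' g where "dm g = V k'" "cd g = V i \<odot> V j" "g \<noteq> zr (V k') (V i \<odot> V j)"
    using out_in[OF f] by blast
  then obtain ts where ts: "factor_list ts (V i \<odot> V j)" "dsum ts (V i \<odot> V j) = idm (V i \<odot> V j)"
    by (rule decomp)
  let ?ts = "map (\<lambda>(k, x, y). (k, y, x)) ts"
  have "\<forall>(k, x, y)\<in>set ?ts. x \<in> hom C (V i \<odot> V j) (V k) \<and> y \<in> hom C (V k) (V i \<odot> V j)"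
    using ts(1) unfolding factor_list_def hom_def by auto
  moreover have "foldr (\<lambda>(k, x, y). madd C (y \<cdot> x)) ?ts z = foldr (\<lambda>(k, x, y) acc. x \<cdot> y \<oplus> acc) ts z"
    for z by (induction ts) auto
  ultimately show ?thesis using ts(2) by fastforce
qed

lemma op_psi_system: "psi_system (op_mcat C) sc V st (\<lambda>j. dd (st j)) (\<lambda>j. bb (st j))"
  unfolding psi_system_def op_mcat_sel hom_op_mcat
proof (intro conjI allI impI)
  fix i
  show "simple_obj (op_mcat C) sc (V i)"
    unfolding simple_obj_def op_mcat_sel hom_op_mcat smult_def
  proof (intro conjI ballI)
    show "idm (V i) \<noteq> zr (V i) (V i)" by (rule idV_nz)
    fix f assume "f \<in> hom C (V i) (V i)"
    then obtain c where "f = sm c (idm (V i))" using simpleV[of i] unfolding simple_obj_def by blast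
    thus "\<exists>c. f = idm (V i) \<otimes> sc c" by (auto simp: sm_def sc_swap)
  qed
next
  fix i j :: 'i assume "i \<noteq> j"
  thus "hom C (V j) (V i) = {zr (V j) (V i)}" using orth[of j i] unfolding hom_def by auto
next
  fix i show "st (st i) = i" by simp
next
  fix i show "dd (st i) \<in> hom C (V (st i) \<odot> V i) U" by (simp add: hom_def)
next
  fix i show "bb (st i) \<in> hom C U (V (st i) \<odot> V i)" by (simp add: hom_def)
next
  fix i show "(idm (V i) \<otimes> dd (st i)) \<cdot> (bb (st (st i)) \<otimes> idm (V i)) = idm (V i)"
    using zig1[of i] by simp
next
  fix i show "(dd (st (st i)) \<otimes> idm (V i)) \<cdot> (idm (V i) \<otimes> bb (st i)) = idm (V i)"
    using zig2[of i] by simp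
next
  fix i j assume "\<exists>k. hom C (V j \<odot> V i) (V k) \<noteq> {zr (V j \<odot> V i) (V k)}"
  then obtain k f where "dm f = V j \<odot> V i" "cd f = V k" "f \<noteq> zr (V j \<odot> V i) (V k)"
    unfolding hom_def by auto
  thus "\<exists>ts :: ('i \<times> 'm \<times> 'm) list.
          (\<forall>(k, x, y)\<in>set ts. x \<in> hom C (V j \<odot> V i) (V k) \<and> y \<in> hom C (V k) (V j \<odot> V i)) \<and>
          foldr (\<lambda>(k, x, y). madd C (y \<cdot> x)) ts (zr (V j \<odot> V i) (V j \<odot> V i)) = idm (V j \<odot> V i)"
    by (rule op_decomposition)
qed

lemma op_psi_context: "psi_context (op_mcat C) sc V st (\<lambda>j. dd (st j)) (\<lambda>j. bb (st j))"
  using op_smc op_ground_field op_psi_system by (simp add: psi_context_def)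


text \<open>A tree of the opposite category is a tree of C read upside down: positions 1, 2, 3, 4
  become positions 4, 3, 2, 1.\<close>
lemma tree_op:
  assumes "dm y = cd x \<odot> V i" "dm x \<odot> V i = V l \<odot> cd v" "V l \<odot> dm v = cd u"
  shows "psi_context.tree (op_mcat C) V i l u v x y = tree l i y x v u"
  using assms unfolding psi_context.tree_def[OF op_psi_context] tree_def by (simp add: cp_assoc)

lemma indist3_iff_op_indist2:
  assumes "dm w1 = V c" "cd w1 = V a \<odot> V b" "dm w2 = V c" "cd w2 = V a \<odot> V b"
  shows "indist3 a b c w1 w2 \<longleftrightarrow> psi_context.indist2 (op_mcat C) V b a c w1 w2"
proof -
  have "psi_context.tree (op_mcat C) V b l u w x y = tree l b y x w u"
    if "cd u = V l \<odot> V c" "dm x = V l \<odot> V a" "dm y = V n \<odot> V b" "cd x = V n"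
      "dm w = V c" "cd w = V a \<odot> V b" for l n u w x y
    using that by (intro tree_op) simp_all
  thus ?thesis using assms
    unfolding indist3_def psi_context.indist2_def[OF op_psi_context] op_mcat_sel by auto
qed

lemma indist4_iff_op_indist1:
  assumes "dm w1 = V c" "cd w1 = V a \<odot> V b" "dm w2 = V c" "cd w2 = V a \<odot> V b"
  shows "indist4 a b c w1 w2 \<longleftrightarrow> psi_context.indist1 (op_mcat C) V b a c w1 w2"
proof -
  have "psi_context.tree (op_mcat C) V i a w v x y = tree a i y x v w"
    if "cd v = V j \<odot> V i" "dm v = V b" "cd x = V n" "dm x = V a \<odot> V j" "dm y = V n \<odot> V i"
      "cd w = V a \<odot> V b" for i j n w v x y
    using that by (intro tree_op) simp_all
  thus ?thesis using assms
    unfolding indist4_def psi_context.indist1_def[OF op_psi_context] op_mcat_sel by auto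
qed

text \<open>Positions 3 and 4 are positions 2 and 1 of the opposite category.\<close>
lemma indist3_iff_indist4:
  assumes w: "dm w1 = V c" "cd w1 = V a \<odot> V b" "dm w2 = V c" "cd w2 = V a \<odot> V b"
  shows "indist3 a b c w1 w2 \<longleftrightarrow> indist4 a b c w1 w2"
  unfolding indist3_iff_op_indist2[OF w] indist4_iff_op_indist1[OF w]
  using psi_context.indist1_iff_indist2[OF op_psi_context, of w1 b a c w2] w by simp

lemma Hsp_D:
  assumes "x \<in> Hsp C V"
  shows "dm (fst x (i, j, k)) = V i \<odot> V j" "cd (fst x (i, j, k)) = V k"
    "dm (snd x (i, j, k)) = V k" "cd (snd x (i, j, k)) = V i \<odot> V j"
  using assms unfolding Hsp_def hom_def by auto

lemma endH_D: "f \<in> endH C sc V \<Longrightarrow> x \<in> Hsp C V \<Longrightarrow> f x \<in> Hsp C V"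
  unfolding endH_def by blast

definition tm where "tm u v x y i j k l m n =
  tree i l (fst u (k, l, m)) (fst v (i, j, k)) (snd x (j, l, n)) (snd y (i, n, m))"

lemma Tform_tm:
  "Tform C sc V u v x y = Sum_any (\<lambda>(i, j, k, l, m, n). bracket C sc (V m) (tm u v x y i j k l m n))"
  unfolding Tform_def tm_def tree_def ..

lemma tm_typed:
  assumes "u \<in> Hsp C V" "v \<in> Hsp C V" "x \<in> Hsp C V" "y \<in> Hsp C V"
  shows "dm (tm u v x y i j k l m n) = V m \<and> cd (tm u v x y i j k l m n) = V m"
  using Hsp_D[OF assms(1)] Hsp_D[OF assms(2)] Hsp_D[OF assms(3)] Hsp_D[OF assms(4)]
  unfolding tm_def tree_def by simp

lemma Tform_cong:
  assumes "\<And>i j k l m n. tm u v x y i j k l m n = tm u' v' x' y' i j k l m n"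
  shows "Tform C sc V u v x y = Tform C sc V u' v' x' y'"
  unfolding Tform_tm using assms by simp

definition only_term where "only_term u v x y i j k l m n \<longleftrightarrow>
  (\<forall>i' j' k' l' m' n'. (i', j', k', l', m', n') \<noteq> (i, j, k, l, m, n) \<longrightarrow>
     fst u (k', l', m') = zr (V k' \<odot> V l') (V m') \<or> fst v (i', j', k') = zr (V i' \<odot> V j') (V k') \<or>
     snd x (j', l', n') = zr (V n') (V j' \<odot> V l') \<or> snd y (i', n', m') = zr (V m') (V i' \<odot> V n'))"

lemma Tform_only_term:
  assumes H: "u \<in> Hsp C V" "v \<in> Hsp C V" "x \<in> Hsp C V" "y \<in> Hsp C V"
    and only: "only_term u v x y i j k l m n"
  shows "Tform C sc V u v x y = bracket C sc (V m) (tm u v x y i j k l m n)"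
proof -
  let ?s = "\<lambda>(i, j, k, l, m, n). bracket C sc (V m) (tm u v x y i j k l m n)"
  have "?s q = 0" if "q \<noteq> (i, j, k, l, m, n)" for q
  proof -
    obtain i' j' k' l' m' n' where q: "q = (i', j', k', l', m', n')" by (cases q) auto
    have "fst u (k', l', m') = zr (V k' \<odot> V l') (V m') \<or> fst v (i', j', k') = zr (V i' \<odot> V j') (V k') \<or>
      snd x (j', l', n') = zr (V n') (V j' \<odot> V l') \<or> snd y (i', n', m') = zr (V m') (V i' \<odot> V n')"
      using only that q unfolding only_term_def by blast
    hence "tm u v x y i' j' k' l' m' n' = zr (V m') (V m')"
      using Hsp_D[OF H(1)] Hsp_D[OF H(2)] Hsp_D[OF H(3)] Hsp_D[OF H(4)]
      unfolding tm_def tree_def by auto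
    thus ?thesis using q br_zr by simp
  qed
  hence "{q. ?s q \<noteq> 0} \<subseteq> {(i, j, k, l, m, n)}" by blast
  hence "Sum_any ?s = sum ?s {(i, j, k, l, m, n)}" by (intro Sum_any.expand_superset) auto
  thus ?thesis unfolding Tform_tm by simp
qed

text \<open>Equal values of T on quadruples with a single summand force equal trees, since the
  bracket is injective.\<close>
lemma tm_eq_if_Tform_eq:
  assumes H: "u \<in> Hsp C V" "v \<in> Hsp C V" "x \<in> Hsp C V" "y \<in> Hsp C V"
    and H': "u' \<in> Hsp C V" "v' \<in> Hsp C V" "x' \<in> Hsp C V" "y' \<in> Hsp C V"
    and eq: "Tform C sc V u v x y = Tform C sc V u' v' x' y'"
    and only: "only_term u v x y i j k l m n" "only_term u' v' x' y' i j k l m n"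
  shows "tm u v x y i j k l m n = tm u' v' x' y' i j k l m n"
  using eq Tform_only_term[OF H only(1)] Tform_only_term[OF H' only(2)]
    br_inj tm_typed[OF H] tm_typed[OF H'] by metis

definition dh where "dh t f = ((\<lambda>(i, j, k). if (i, j, k) = t then f else zr (V i \<odot> V j) (V k)),
                                (\<lambda>(i, j, k). zr (V k) (V i \<odot> V j)))"
definition dc where "dc t f = ((\<lambda>(i, j, k). zr (V i \<odot> V j) (V k)),
                                (\<lambda>(i, j, k). if (i, j, k) = t then f else zr (V k) (V i \<odot> V j)))"

lemma dh_app[simp]:
  "fst (dh t f) t' = (if t' = t then f else zr (V (fst t') \<odot> V (fst (snd t'))) (V (snd (snd t'))))"
  "snd (dh t f) t' = zr (V (snd (snd t'))) (V (fst t') \<odot> V (fst (snd t')))"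
  unfolding dh_def by (cases t', auto)+
lemma dc_app[simp]:
  "fst (dc t f) t' = zr (V (fst t') \<odot> V (fst (snd t'))) (V (snd (snd t')))"
  "snd (dc t f) t' = (if t' = t then f else zr (V (snd (snd t'))) (V (fst t') \<odot> V (fst (snd t'))))"
  unfolding dc_def by (cases t', auto)+

lemma empty_triples[simp]: "{(i::'i, j::'i, k::'i). False} = {}"
  by auto

lemma dh_Hsp:
  assumes "dm f = V i \<odot> V j" "cd f = V k"
  shows "dh (i, j, k) f \<in> Hsp C V"
proof -
  have "{(i', j', k'). fst (dh (i, j, k) f) (i', j', k') \<noteq> zr (V i' \<odot> V j') (V k')} \<subseteq> {(i, j, k)}"
    by auto
  hence "finite {(i', j', k'). fst (dh (i, j, k) f) (i', j', k') \<noteq> zr (V i' \<odot> V j') (V k')}"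
    using finite_subset by blast
  thus ?thesis using assms unfolding Hsp_def hom_def dh_def by (auto split: if_splits)
qed

lemma dc_Hsp:
  assumes "dm f = V k" "cd f = V i \<odot> V j"
  shows "dc (i, j, k) f \<in> Hsp C V"
proof -
  have "{(i', j', k'). snd (dc (i, j, k) f) (i', j', k') \<noteq> zr (V k') (V i' \<odot> V j')} \<subseteq> {(i, j, k)}"
    by auto
  hence "finite {(i', j', k'). snd (dc (i, j, k) f) (i', j', k') \<noteq> zr (V k') (V i' \<odot> V j')}"
    using finite_subset by blast
  thus ?thesis using assms unfolding Hsp_def hom_def dc_def by (auto split: if_splits)
qed

lemma Teq_simps:
  "Teq C sc V 1 a b \<longleftrightarrow> (\<forall>u\<in>Hsp C V. \<forall>v\<in>Hsp C V. \<forall>x\<in>Hsp C V. \<forall>y\<in>Hsp C V.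
     Tform C sc V (a u) v x y = Tform C sc V (b u) v x y)"
  "Teq C sc V 2 a b \<longleftrightarrow> (\<forall>u\<in>Hsp C V. \<forall>v\<in>Hsp C V. \<forall>x\<in>Hsp C V. \<forall>y\<in>Hsp C V.
     Tform C sc V u (a v) x y = Tform C sc V u (b v) x y)"
  "Teq C sc V 3 a b \<longleftrightarrow> (\<forall>u\<in>Hsp C V. \<forall>v\<in>Hsp C V. \<forall>x\<in>Hsp C V. \<forall>y\<in>Hsp C V.
     Tform C sc V u v (a x) y = Tform C sc V u v (b x) y)"
  "Teq C sc V 4 a b \<longleftrightarrow> (\<forall>u\<in>Hsp C V. \<forall>v\<in>Hsp C V. \<forall>x\<in>Hsp C V. \<forall>y\<in>Hsp C V.
     Tform C sc V u v x (a y) = Tform C sc V u v x (b y))"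
  by (simp_all add: Teq_def Tr_def)

text \<open>The forward direction tests with elements
  concentrated in the components that single out one summand of T.\<close>

lemma Teq1_iff:
  assumes a: "a \<in> endH C sc V" and b: "b \<in> endH C sc V"
  shows "Teq C sc V 1 a b \<longleftrightarrow>
    (\<forall>w\<in>Hsp C V. \<forall>k l m. indist1 k l m (fst (a w) (k, l, m)) (fst (b w) (k, l, m)))"
proof
  assume T: "Teq C sc V 1 a b"
  show "\<forall>w\<in>Hsp C V. \<forall>k l m. indist1 k l m (fst (a w) (k, l, m)) (fst (b w) (k, l, m))"
    unfolding indist1_def
  proof (intro ballI allI impI)
    fix w k l m i j n v x y
    assume "w \<in> Hsp C V" and "dm v = V i \<odot> V j" "cd v = V k" "dm x = V n" "cd x = V j \<odot> V l"
      "dm y = V m" "cd y = V i \<odot> V n"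
    hence H: "a w \<in> Hsp C V" "b w \<in> Hsp C V" "dh (i, j, k) v \<in> Hsp C V"
      "dc (j, l, n) x \<in> Hsp C V" "dc (i, n, m) y \<in> Hsp C V"
      using endH_D[OF a] endH_D[OF b] dh_Hsp dc_Hsp by auto
    hence "Tform C sc V (a w) (dh (i, j, k) v) (dc (j, l, n) x) (dc (i, n, m) y) =
           Tform C sc V (b w) (dh (i, j, k) v) (dc (j, l, n) x) (dc (i, n, m) y)"
      using T \<open>w \<in> Hsp C V\<close> unfolding Teq_simps by blast
    hence "tm (a w) (dh (i, j, k) v) (dc (j, l, n) x) (dc (i, n, m) y) i j k l m n =
           tm (b w) (dh (i, j, k) v) (dc (j, l, n) x) (dc (i, n, m) y) i j k l m n"
      by (rule tm_eq_if_Tform_eq[OF H(1,3-5) H(2-5)]) (auto simp: only_term_def)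
    thus "tree i l (fst (a w) (k, l, m)) v x y = tree i l (fst (b w) (k, l, m)) v x y"
      unfolding tm_def by simp
  qed
next
  assume Q: "\<forall>w\<in>Hsp C V. \<forall>k l m. indist1 k l m (fst (a w) (k, l, m)) (fst (b w) (k, l, m))"
  show "Teq C sc V 1 a b" unfolding Teq_simps
  proof (intro ballI Tform_cong)
    fix u v x y i j k l m n
    assume "u \<in> Hsp C V" "v \<in> Hsp C V" "x \<in> Hsp C V" "y \<in> Hsp C V"
    thus "tm (a u) v x y i j k l m n = tm (b u) v x y i j k l m n"
      using Q Hsp_D unfolding indist1_def tm_def by simp
  qed
qed

lemma Teq2_iff:
  assumes a: "a \<in> endH C sc V" and b: "b \<in> endH C sc V"
  shows "Teq C sc V 2 a b \<longleftrightarrow>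
    (\<forall>w\<in>Hsp C V. \<forall>i j k. indist2 i j k (fst (a w) (i, j, k)) (fst (b w) (i, j, k)))"
proof
  assume T: "Teq C sc V 2 a b"
  show "\<forall>w\<in>Hsp C V. \<forall>i j k. indist2 i j k (fst (a w) (i, j, k)) (fst (b w) (i, j, k))"
    unfolding indist2_def
  proof (intro ballI allI impI)
    fix w i j k l m n u x y
    assume "w \<in> Hsp C V" and "dm u = V k \<odot> V l" "cd u = V m" "dm x = V n" "cd x = V j \<odot> V l"
      "dm y = V m" "cd y = V i \<odot> V n"
    hence H: "a w \<in> Hsp C V" "b w \<in> Hsp C V" "dh (k, l, m) u \<in> Hsp C V"
      "dc (j, l, n) x \<in> Hsp C V" "dc (i, n, m) y \<in> Hsp C V"
      using endH_D[OF a] endH_D[OF b] dh_Hsp dc_Hsp by auto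
    hence "Tform C sc V (dh (k, l, m) u) (a w) (dc (j, l, n) x) (dc (i, n, m) y) =
           Tform C sc V (dh (k, l, m) u) (b w) (dc (j, l, n) x) (dc (i, n, m) y)"
      using T \<open>w \<in> Hsp C V\<close> unfolding Teq_simps by blast
    hence "tm (dh (k, l, m) u) (a w) (dc (j, l, n) x) (dc (i, n, m) y) i j k l m n =
           tm (dh (k, l, m) u) (b w) (dc (j, l, n) x) (dc (i, n, m) y) i j k l m n"
      by (rule tm_eq_if_Tform_eq[OF H(3,1,4,5) H(3,2,4,5)]) (auto simp: only_term_def)
    thus "tree i l u (fst (a w) (i, j, k)) x y = tree i l u (fst (b w) (i, j, k)) x y"
      unfolding tm_def by simp
  qed
next
  assume Q: "\<forall>w\<in>Hsp C V. \<forall>i j k. indist2 i j k (fst (a w) (i, j, k)) (fst (b w) (i, j, k))"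
  show "Teq C sc V 2 a b" unfolding Teq_simps
  proof (intro ballI Tform_cong)
    fix u v x y i j k l m n
    assume "u \<in> Hsp C V" "v \<in> Hsp C V" "x \<in> Hsp C V" "y \<in> Hsp C V"
    thus "tm u (a v) x y i j k l m n = tm u (b v) x y i j k l m n"
      using Q Hsp_D unfolding indist2_def tm_def by simp
  qed
qed

lemma Teq3_iff:
  assumes a: "a \<in> endH C sc V" and b: "b \<in> endH C sc V"
  shows "Teq C sc V 3 a b \<longleftrightarrow>
    (\<forall>w\<in>Hsp C V. \<forall>j l n. indist3 j l n (snd (a w) (j, l, n)) (snd (b w) (j, l, n)))"
proof
  assume T: "Teq C sc V 3 a b"
  show "\<forall>w\<in>Hsp C V. \<forall>j l n. indist3 j l n (snd (a w) (j, l, n)) (snd (b w) (j, l, n))"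
    unfolding indist3_def
  proof (intro ballI allI impI)
    fix w j l n i k m u v y
    assume "w \<in> Hsp C V" and "dm u = V k \<odot> V l" "cd u = V m" "dm v = V i \<odot> V j" "cd v = V k"
      "dm y = V m" "cd y = V i \<odot> V n"
    hence H: "a w \<in> Hsp C V" "b w \<in> Hsp C V" "dh (k, l, m) u \<in> Hsp C V"
      "dh (i, j, k) v \<in> Hsp C V" "dc (i, n, m) y \<in> Hsp C V"
      using endH_D[OF a] endH_D[OF b] dh_Hsp dc_Hsp by auto
    hence "Tform C sc V (dh (k, l, m) u) (dh (i, j, k) v) (a w) (dc (i, n, m) y) =
           Tform C sc V (dh (k, l, m) u) (dh (i, j, k) v) (b w) (dc (i, n, m) y)"
      using T \<open>w \<in> Hsp C V\<close> unfolding Teq_simps by blast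
    hence "tm (dh (k, l, m) u) (dh (i, j, k) v) (a w) (dc (i, n, m) y) i j k l m n =
           tm (dh (k, l, m) u) (dh (i, j, k) v) (b w) (dc (i, n, m) y) i j k l m n"
      by (rule tm_eq_if_Tform_eq[OF H(3,4,1,5) H(3,4,2,5)]) (auto simp: only_term_def)
    thus "tree i l u v (snd (a w) (j, l, n)) y = tree i l u v (snd (b w) (j, l, n)) y"
      unfolding tm_def by simp
  qed
next
  assume Q: "\<forall>w\<in>Hsp C V. \<forall>j l n. indist3 j l n (snd (a w) (j, l, n)) (snd (b w) (j, l, n))"
  show "Teq C sc V 3 a b" unfolding Teq_simps
  proof (intro ballI Tform_cong)
    fix u v x y i j k l m n
    assume "u \<in> Hsp C V" "v \<in> Hsp C V" "x \<in> Hsp C V" "y \<in> Hsp C V"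
    thus "tm u v (a x) y i j k l m n = tm u v (b x) y i j k l m n"
      using Q Hsp_D unfolding indist3_def tm_def by simp
  qed
qed

lemma Teq4_iff:
  assumes a: "a \<in> endH C sc V" and b: "b \<in> endH C sc V"
  shows "Teq C sc V 4 a b \<longleftrightarrow>
    (\<forall>w\<in>Hsp C V. \<forall>i n m. indist4 i n m (snd (a w) (i, n, m)) (snd (b w) (i, n, m)))"
proof
  assume T: "Teq C sc V 4 a b"
  show "\<forall>w\<in>Hsp C V. \<forall>i n m. indist4 i n m (snd (a w) (i, n, m)) (snd (b w) (i, n, m))"
    unfolding indist4_def
  proof (intro ballI allI impI)
    fix w i n m j k l u v x
    assume "w \<in> Hsp C V" and "dm u = V k \<odot> V l" "cd u = V m" "dm v = V i \<odot> V j" "cd v = V k"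
      "dm x = V n" "cd x = V j \<odot> V l"
    hence H: "a w \<in> Hsp C V" "b w \<in> Hsp C V" "dh (k, l, m) u \<in> Hsp C V"
      "dh (i, j, k) v \<in> Hsp C V" "dc (j, l, n) x \<in> Hsp C V"
      using endH_D[OF a] endH_D[OF b] dh_Hsp dc_Hsp by auto
    hence "Tform C sc V (dh (k, l, m) u) (dh (i, j, k) v) (dc (j, l, n) x) (a w) =
           Tform C sc V (dh (k, l, m) u) (dh (i, j, k) v) (dc (j, l, n) x) (b w)"
      using T \<open>w \<in> Hsp C V\<close> unfolding Teq_simps by blast
    hence "tm (dh (k, l, m) u) (dh (i, j, k) v) (dc (j, l, n) x) (a w) i j k l m n =
           tm (dh (k, l, m) u) (dh (i, j, k) v) (dc (j, l, n) x) (b w) i j k l m n"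
      by (rule tm_eq_if_Tform_eq[OF H(3,4,5,1) H(3,4,5,2)]) (auto simp: only_term_def)
    thus "tree i l u v x (snd (a w) (i, n, m)) = tree i l u v x (snd (b w) (i, n, m))"
      unfolding tm_def by simp
  qed
next
  assume Q: "\<forall>w\<in>Hsp C V. \<forall>i n m. indist4 i n m (snd (a w) (i, n, m)) (snd (b w) (i, n, m))"
  show "Teq C sc V 4 a b" unfolding Teq_simps
  proof (intro ballI Tform_cong)
    fix u v x y i j k l m n
    assume "u \<in> Hsp C V" "v \<in> Hsp C V" "x \<in> Hsp C V" "y \<in> Hsp C V"
    thus "tm u v x (a y) i j k l m n = tm u v x (b y) i j k l m n"
      using Q Hsp_D unfolding indist4_def tm_def by simp
  qed
qed

theorem Teq1_iff_Teq2:
  assumes a: "a \<in> endH C sc V" and b: "b \<in> endH C sc V"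
  shows "Teq C sc V 1 a b \<longleftrightarrow> Teq C sc V 2 a b"
proof -
  have "indist1 k l m (fst (a w) (k, l, m)) (fst (b w) (k, l, m)) \<longleftrightarrow>
        indist2 k l m (fst (a w) (k, l, m)) (fst (b w) (k, l, m))" if "w \<in> Hsp C V" for w k l m
    using Hsp_D[OF endH_D[OF a that]] Hsp_D[OF endH_D[OF b that]] by (intro indist1_iff_indist2)
  thus ?thesis unfolding Teq1_iff[OF a b] Teq2_iff[OF a b] by blast
qed

theorem Teq3_iff_Teq4:
  assumes a: "a \<in> endH C sc V" and b: "b \<in> endH C sc V"
  shows "Teq C sc V 3 a b \<longleftrightarrow> Teq C sc V 4 a b"
proof -
  have "indist3 j l n (snd (a w) (j, l, n)) (snd (b w) (j, l, n)) \<longleftrightarrow>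
        indist4 j l n (snd (a w) (j, l, n)) (snd (b w) (j, l, n))" if "w \<in> Hsp C V" for w j l n
    using Hsp_D[OF endH_D[OF a that]] Hsp_D[OF endH_D[OF b that]] by (intro indist3_iff_indist4)
  thus ?thesis unfolding Teq3_iff[OF a b] Teq4_iff[OF a b] by blast
qed

end

theorem lemma4p1:
  fixes C :: "('o, 'm) mcat"
    and sc :: "'k::field \<Rightarrow> 'm"
    and V :: "'i \<Rightarrow> 'o"
    and st :: "'i \<Rightarrow> 'i"
    and bb dd :: "'i \<Rightarrow> 'm"
    and a b :: "('i, 'm) Helem \<Rightarrow> ('i, 'm) Helem"
  assumes "strict_monoidal_ab_cat C"
    and "ground_field C sc"
    and "psi_system C sc V st bb dd"
    and "a \<in> endH C sc V"
    and "b \<in> endH C sc V"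
  shows "(Teq C sc V 1 a b \<longleftrightarrow> Teq C sc V 2 a b) \<and>
         (Teq C sc V 3 a b \<longleftrightarrow> Teq C sc V 4 a b) \<and>
         (Tequal C sc V a b \<longleftrightarrow>
            (\<exists>r\<in>{1, 2}. Teq C sc V r a b) \<and> (\<exists>s\<in>{3, 4}. Teq C sc V s a b))"
proof -
  interpret psi_context C sc V st bb dd
    using assms(1-3) by unfold_locales
  have "Teq C sc V 1 a b \<longleftrightarrow> Teq C sc V 2 a b" by (rule Teq1_iff_Teq2[OF assms(4,5)])
  moreover have "Teq C sc V 3 a b \<longleftrightarrow> Teq C sc V 4 a b" by (rule Teq3_iff_Teq4[OF assms(4,5)])
  ultimately show ?thesis unfolding Tequal_def by auto
qed

end
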